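(* Let $\mathcal Z\subseteq\mathbb R^d$ be compact and convex, $\ell:\mathcal Z\to\mathbb R$ upper semicontinuous, $\phi$ an entropy function, $r\ge0$, $\epsilon\in(0,1)$, and $\hat\mu=\frac1n\sum_{i=1}^n\delta_{\hat z_i}$ with $\hat z_i\in\mathcal Z$. Let $\hat z_{n+1}\in\arg\max_{z\in\mathcal Z}\ell(z)$ with $\hat z_{n+1}\notin\{\hat z_1,\dots,\hat z_n\}$. Take $\mathcal V=\mathcal Z$, $\mathcal W=\mathbb R_+$, $\mathcal G$ the trivial $\sigma$-algebra, $f(v,w)=\ell(v)\,w$, $$\hat\nu=\frac{1-\epsilon}{n}\sum_{i=1}^n\delta_{(\hat z_i,\frac{1}{1-\epsilon})}+\epsilon\,\delta_{(\hat z_{n+1},0)},$$ and the cost $c((v,w),(\hat v,\hat w))=\infty\cdot\mathbb 1_{v\neq\hat v}+g(v)\,\phi\big(w/g(v)\big)$, where $g(v)=\frac1{1-\epsilon}$ if $v\in\{\hat z_1,\dots,\hat z_n\}$, $g(\hat z_{n+1})=0$, and $g(v)=+\infty$ otherwise; explicitly, $c((v,w),(\hat v,\hat w))=\frac1{1-\epsilon}\phi((1-\epsilon)w)$ if $v=\hat v\in\{\hat z_1,\dots,\hat z_n\}$, $=\phi'_\infty\cdot w$ if $v=\hat v=\hat z_{n+1}$, and $=+\infty$ otherwise. Then the OT-DRO problem with conditional moment constraints $\sup\{\mathbb E_\nu[f(V,W)]:\nu\in\mathcal P(\mathcal V\times\mathcal W),\ \mathbb M(\nu,\hat\nu)\le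 r\}$ has the same optimal value as the generalized $\phi$-divergence DRO problem $\sup_{\mu\in\mathcal P(\mathcal Z)}\{\mathbb E_\mu[\ell(Z)]:\mathbb D_\phi(\mu,\hat\mu)\le r\}$.
   Context: An entropy function is a lower semicontinuous convex $\phi:\mathbb R\to\mathbb R\cup\{+\infty\}$ with $\phi(1)=0$, $\mathrm{dom}(\phi)\subseteq\mathbb R_+$, $\mathrm{dom}(\phi)\cap\mathbb R_+\ne\emptyset$; $\phi'_\infty=\lim_{t\to\infty}\phi(t)/t$. Generalized $\phi$-divergence: for any measure $\rho$ dominating $\mu$ and $\hat\mu$, $\mathbb D_\phi(\mu,\hat\mu)=\int\frac{d\hat\mu}{d\rho}\,\phi\big(\frac{d\mu}{d\rho}/\frac{d\hat\mu}{d\rho}\big)d\rho$, with conventions $\phi(0)=\lim_{t\to0^+}\phi(t)$, $0\cdot\phi(0/0)=0$, $0\cdot\phi(\alpha/0)=\alpha\phi'_\infty$ ($\alpha>0$). Extended arithmetic: $\infty\cdot0=0\cdot\infty=0/0=0$, $\infty-\infty=1/0=\infty$. OT discrepancy with conditional moment constraints: let $\mathcal V\subseteq\mathbb R^{d_v}$ and $\mathcal W\subseteq\mathbb R_+$ be closed convex sets, let $(V,W,\hat V,\hat W)$ denote the coordinate random variables on $(\mathcal V\times\mathcal W)\times(\mathcal V\times\mathcal W)$, let $\mathcal G$ be a sub-$\sigma$-algebra (here trivial), and let $c$ be a lower semicontinuous cost on $(\mathcal V\times\mathcal W)^2$ with values in $\mathbb R\cup\{+\infty\}$. For $\nu,\hat\nu\in\mathcal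 P(\mathcal V\times\mathcal W)$, $\mathbb M(\nu,\hat\nu)=\inf\{\mathbb E_\pi[c((V,W),(\hat V,\hat W))]:\ \pi\in\mathcal P((\mathcal V\times\mathcal W)^2),\ \pi_{(V,W)}=\nu,\ \pi_{(\hat V,\hat W)}=\hat\nu,\ \mathbb E_\pi[W\mid\mathcal G]=1\ \pi\text{-a.s.}\}$, where $\pi_{(V,W)},\pi_{(\hat V,\hat W)}$ are the marginals of $\pi$. When $\mathcal G$ is trivial the constraint reads $\mathbb E_\pi[W]=1$. *)

theory Defs
  imports "HOL-Analysis.Analysis" "HOL-Probability.Probability"
begin

definition lsc_ereal :: "(real \<Rightarrow> ereal) \<Rightarrow> bool" where
  "lsc_ereal f \<longleftrightarrow> (\<forall>x. f x \<le> Liminf (at x) f)"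

definition convex_ereal :: "(real \<Rightarrow> ereal) \<Rightarrow> bool" where
  "convex_ereal f \<longleftrightarrow>
     (\<forall>x y t. 0 \<le> t \<and> t \<le> 1 \<longrightarrow>
        f ((1 - t) * x + t * y) \<le> ereal (1 - t) * f x + ereal t * f y)"

definition edom :: "(real \<Rightarrow> ereal) \<Rightarrow> real set" where
  "edom f = {t. f t < \<infinity>}"

definition entropy_function :: "(real \<Rightarrow> ereal) \<Rightarrow> bool" where
  "entropy_function \<phi> \<longleftrightarrow>
     (\<forall>t. \<phi> t \<noteq> -\<infinity>) \<and> lsc_ereal \<phi> \<and> convex_ereal \<phi> \<and> \<phi> 1 = 0 \<and>
     edom \<phi> \<subseteq> {0..} \<and> edom \<phi> \<inter> {0..} \<noteq> {}"

definition phi_inf :: "(real \<Rightarrow> ereal) \<Rightarrow> ereal" where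
  "phi_inf \<phi> = Lim at_top (\<lambda>t. \<phi> t / ereal t)"

definition phi_conv :: "(real \<Rightarrow> ereal) \<Rightarrow> real \<Rightarrow> ereal" where
  "phi_conv \<phi> t = (if t = 0 then Lim (at_right 0) \<phi> else \<phi> t)"

text \<open>Integral of an extended-real function as (positive part) - (negative part),
  with the convention oo - oo = oo (which is the ereal convention in Isabelle).\<close>
definition ext_int :: "'a measure \<Rightarrow> ('a \<Rightarrow> ereal) \<Rightarrow> ereal" where
  "ext_int M f = enn2ereal (\<integral>\<^sup>+ x. e2ennreal (f x) \<partial>M)
                 - enn2ereal (\<integral>\<^sup>+ x. e2ennreal (- f x) \<partial>M)"

definition sum_meas :: "'a measure \<Rightarrow> 'a measure \<Rightarrow> 'a measure" where
  "sum_meas M N = measure_of (space M) (sets M) (\<lambda>A. emeasure M A + emeasure N A)"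

text \<open>Integrand (dmu/drho) / (dmuhat/drho) with the conventions 0 phi(0/0) = 0 and
  0 phi(a/0) = a phi'_infty.\<close>
definition div_integrand :: "(real \<Rightarrow> ereal) \<Rightarrow> ennreal \<Rightarrow> ennreal \<Rightarrow> ereal" where
  "div_integrand \<phi> p q =
     (if q = 0 then (if p = 0 then 0 else enn2ereal p * phi_inf \<phi>)
      else enn2ereal q * phi_conv \<phi> (enn2real p / enn2real q))"

definition phi_div :: "(real \<Rightarrow> ereal) \<Rightarrow> 'a measure \<Rightarrow> 'a measure \<Rightarrow> ereal" where
  "phi_div \<phi> \<mu> \<mu>h =
     (let \<rho> = sum_meas \<mu> \<mu>h in
      ext_int \<rho> (\<lambda>x. div_integrand \<phi> (RN_deriv \<rho> \<mu> x) (RN_deriv \<rho> \<mu>h x)))"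

definition OT_disc ::
  "(('a::euclidean_space \<times> real) \<Rightarrow> ('a \<times> real) \<Rightarrow> ereal) \<Rightarrow>
   ('a \<times> real) measure \<Rightarrow> ('a \<times> real) measure \<Rightarrow> ereal" where
  "OT_disc c \<nu> \<nu>h =
     (INF \<pi> \<in> {\<pi> :: (('a \<times> real) \<times> ('a \<times> real)) measure.
                  prob_space \<pi> \<and> sets \<pi> = sets borel \<and>
                  distr \<pi> borel fst = \<nu> \<and> distr \<pi> borel snd = \<nu>h \<and>
                  (\<integral>\<^sup>+ x. ennreal (snd (fst x)) \<partial>\<pi>) = 1}.
        ext_int \<pi> (\<lambda>x. c (fst x) (snd x)))"

definition usc_on :: "'a::topological_space set \<Rightarrow> ('a \<Rightarrow> real) \<Rightarrow> bool" where
  "usc_on Z f \<longleftrightarrow> (\<forall>z\<in>Z. \<forall>a. f z < a \<longrightarrow> (\<forall>\<^sub>F y in at z within Z. f y < a))"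

definition empirical :: "nat \<Rightarrow> (nat \<Rightarrow> 'a::topological_space) \<Rightarrow> 'a measure" where
  "empirical n zh = distr (measure_pmf (pmf_of_set {1..n})) borel zh"

text \<open>nuhat = (1-eps)/n sum delta_{(zh i, 1/(1-eps))} + eps delta_{(zh (n+1), 0)}.\<close>
definition nu_hat :: "nat \<Rightarrow> (nat \<Rightarrow> 'a::topological_space) \<Rightarrow> real \<Rightarrow> ('a \<times> real) measure" where
  "nu_hat n zh \<epsilon> = distr (measure_pmf
      (bind_pmf (bernoulli_pmf \<epsilon>)
        (\<lambda>b. if b then return_pmf (zh (Suc n), 0)
             else map_pmf (\<lambda>i. (zh i, 1 / (1 - \<epsilon>))) (pmf_of_set {1..n})))) borel (\<lambda>x. x)"

definition cost_ot :: "(real \<Rightarrow> ereal) \<Rightarrow> nat \<Rightarrow> (nat \<Rightarrow> 'a) \<Rightarrow> real \<Rightarrow>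
    ('a \<times> real) \<Rightarrow> ('a \<times> real) \<Rightarrow> ereal" where
  "cost_ot \<phi> n zh \<epsilon> vw vwh =
     (let v = fst vw; w = snd vw; vh = fst vwh in
      if v = vh \<and> v \<in> zh ` {1..n} then phi_conv \<phi> ((1 - \<epsilon>) * w) / ereal (1 - \<epsilon>)
      else if v = vh \<and> v = zh (Suc n) then phi_inf \<phi> * ereal w
      else \<infinity>)"

end

theory Submission
  imports Defs
begin

(* Both inequalities are proved by explicit transport between the two feasible sets.
   Given \<mu> with D_phi(\<mu>, \<mu>h) \<le> r, lift every atom x of \<mu>h to (x, \<mu>{x} / ((1 - \<epsilon>) \<mu>h{x})) and the
   remaining mass \<mu>(Z - supp \<mu>h) to the maximiser, with weight \<mu>(Z - supp \<mu>h) / \<epsilon>: the diagonal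
   coupling of this \<nu> with \<nu>h has E[W] = 1 and cost exactly D_phi(\<mu>, \<mu>h), and moving mass to the
   maximiser can only increase the objective.
   Conversely, a coupling of finite cost is supported on the diagonal over the n + 1 points, so \<nu>
   has the fibre masses of \<nu>h; the W-reweighted first marginal \<mu>(B) = E_\<nu>[W 1_B(V)] has the same
   objective, and Jensen's inequality on each fibre bounds D_phi(\<mu>, \<mu>h) by E_\<nu>[c] \<le> r. *)

section \<open>Entropy functions\<close>

definition phi_real :: "(real \<Rightarrow> ereal) \<Rightarrow> real \<Rightarrow> real" where
  "phi_real \<phi> t = real_of_ereal (\<phi> t)"

lemma tendsto_SUP_at_top_mono:
  fixes f :: "real \<Rightarrow> ereal"
  assumes mono: "\<And>s t. c < s \<Longrightarrow> s \<le> t \<Longrightarrow> f s \<le> f t"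
  shows "(f \<longlongrightarrow> (SUP t\<in>{c<..}. f t)) at_top"
  unfolding order_tendsto_iff
proof safe
  fix l assume "l < (SUP t\<in>{c<..}. f t)"
  then obtain t where t: "c < t" "l < f t" unfolding less_SUP_iff by auto
  show "\<forall>\<^sub>F x in at_top. l < f x"
    using eventually_ge_at_top[of t] by eventually_elim (use mono t in \<open>auto intro: less_le_trans\<close>)
next
  fix u assume u: "(SUP t\<in>{c<..}. f t) < u"
  show "\<forall>\<^sub>F x in at_top. f x < u"
    using eventually_gt_at_top[of c]
    by eventually_elim (metis SUP_upper greaterThan_iff le_less_trans u)
qed

context
  fixes \<phi> :: "real \<Rightarrow> ereal"
  assumes ef: "entropy_function \<phi>"
begin

lemma entropy_neq_minf: "\<phi> t \<noteq> -\<infinity>"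
  using ef unfolding entropy_function_def by auto

lemma entropy_one: "\<phi> 1 = 0"
  using ef unfolding entropy_function_def by auto

lemma entropy_convex:
  "0 \<le> l \<Longrightarrow> l \<le> 1 \<Longrightarrow> \<phi> ((1 - l) * x + l * y) \<le> ereal (1 - l) * \<phi> x + ereal l * \<phi> y"
  using ef unfolding entropy_function_def convex_ereal_def by auto

lemma entropy_lsc: "\<phi> x \<le> Liminf (at x) \<phi>"
  using ef unfolding entropy_function_def lsc_ereal_def by auto

lemma entropy_eq_phi_real: "\<phi> t < \<infinity> \<Longrightarrow> \<phi> t = ereal (phi_real \<phi> t)"
  using entropy_neq_minf[of t] unfolding phi_real_def by (cases "\<phi> t") auto

lemma entropy_convex_finite:
  assumes "\<phi> x < \<infinity>" "\<phi> y < \<infinity>" "0 \<le> l" "l \<le> 1"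
  shows "\<phi> ((1 - l) * x + l * y) < \<infinity>"
    and "phi_real \<phi> ((1 - l) * x + l * y) \<le> (1 - l) * phi_real \<phi> x + l * phi_real \<phi> y"
proof -
  have le: "\<phi> ((1 - l) * x + l * y) \<le> ereal ((1 - l) * phi_real \<phi> x + l * phi_real \<phi> y)"
    using entropy_convex[OF assms(3,4), of x y]
    by (simp add: entropy_eq_phi_real[OF assms(1)] entropy_eq_phi_real[OF assms(2)])
  then show fin: "\<phi> ((1 - l) * x + l * y) < \<infinity>"
    by (cases "\<phi> ((1 - l) * x + l * y)") auto
  show "phi_real \<phi> ((1 - l) * x + l * y) \<le> (1 - l) * phi_real \<phi> x + l * phi_real \<phi> y"
    using le by (subst (asm) entropy_eq_phi_real[OF fin]) simp
qed

lemma entropy_convex_between: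
  assumes "\<phi> x < \<infinity>" "\<phi> y < \<infinity>" "x < m" "m < y"
  shows "\<phi> m < \<infinity>"
    and "(y - x) * phi_real \<phi> m \<le> (y - m) * phi_real \<phi> x + (m - x) * phi_real \<phi> y"
proof -
  define l where "l = (m - x) / (y - x)"
  have l: "l * (y - x) = m - x" "0 \<le> l" "l \<le> 1" unfolding l_def using assms by auto
  have m: "m = (1 - l) * x + l * y" using l(1) by (simp add: algebra_simps)
  show "\<phi> m < \<infinity>" using entropy_convex_finite(1)[OF assms(1,2) l(2,3)] m by simp
  have "(y - x) * phi_real \<phi> m \<le> (y - x) * ((1 - l) * phi_real \<phi> x + l * phi_real \<phi> y)"
    using entropy_convex_finite(2)[OF assms(1,2) l(2,3)] m assms by (intro mult_left_mono) auto
  also have "\<dots> = ((y - x) * (1 - l)) * phi_real \<phi> x + ((y - x) * l) * phi_real \<phi> y"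
    by (simp add: algebra_simps)
  also have "(y - x) * l = m - x" using l(1) by (simp add: algebra_simps)
  also have "(y - x) * (1 - l) = y - m" using l(1) by (simp add: algebra_simps)
  finally show "(y - x) * phi_real \<phi> m \<le> (y - m) * phi_real \<phi> x + (m - x) * phi_real \<phi> y" .
qed

lemma entropy_dom_interval:
  assumes "\<phi> x < \<infinity>" "\<phi> y < \<infinity>" "x \<le> t" "t \<le> y"
  shows "\<phi> t < \<infinity>"
  using entropy_convex_between(1)[OF assms(1,2)] assms by (cases "x = t \<or> t = y") auto

lemma entropy_three_slope:
  assumes "\<phi> x < \<infinity>" "\<phi> y < \<infinity>" "x < m" "m < y"
  shows "(phi_real \<phi> m - phi_real \<phi> x) / (m - x) \<le> (phi_real \<phi> y - phi_real \<phi> m) / (y - m)"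
  using entropy_convex_between(2)[OF assms] assms by (simp add: field_simps algebra_simps)

lemma entropy_subgradient:
  assumes "\<phi> x < \<infinity>" "\<phi> y < \<infinity>" "x < m" "m < y"
  obtains s where "\<And>t. ereal (phi_real \<phi> m + s * (t - m)) \<le> \<phi> t"
proof -
  \<comment> \<open>the supremum of the left difference quotients at m is a subgradient\<close>
  define T where "T = {(phi_real \<phi> m - phi_real \<phi> t) / (m - t) | t. \<phi> t < \<infinity> \<and> t < m}"
  define s where "s = Sup T"
  have mD: "\<phi> m < \<infinity>" using entropy_convex_between(1)[OF assms] .
  have ne: "T \<noteq> {}" unfolding T_def using assms by auto
  have upper: "z \<le> s" if "z \<in> T" for z
    unfolding s_def using that entropy_three_slope assms mD
    by (intro cSup_upper bdd_aboveI[of _ "(phi_real \<phi> y - phi_real \<phi> m) / (y - m)"]) (auto simp: T_def)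
  have lower: "s \<le> (phi_real \<phi> u - phi_real \<phi> m) / (u - m)" if "\<phi> u < \<infinity>" "m < u" for u
    unfolding s_def using ne that entropy_three_slope mD by (intro cSup_least) (auto simp: T_def)
  have "ereal (phi_real \<phi> m + s * (t - m)) \<le> \<phi> t" for t
  proof (cases "\<phi> t < \<infinity>")
    case fin: True
    have "phi_real \<phi> m + s * (t - m) \<le> phi_real \<phi> t"
    proof (cases t m rule: linorder_cases)
      case less
      then have "(phi_real \<phi> m - phi_real \<phi> t) / (m - t) \<le> s" using upper fin unfolding T_def by auto
      then show ?thesis using less by (simp add: field_simps)
    next
      case greater
      then have "s \<le> (phi_real \<phi> t - phi_real \<phi> m) / (t - m)" using lower fin by auto
      then show ?thesis using greater by (simp add: field_simps)
    qed simp
    then show ?thesis by (simp add: entropy_eq_phi_real[OF fin])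
  qed simp
  then show ?thesis by (rule that)
qed

lemma entropy_affine_minorant: "\<exists>a b. \<forall>t. ereal (a + b * t) \<le> \<phi> t"
proof (cases "\<exists>p. p \<noteq> 1 \<and> \<phi> p < \<infinity>")
  case True
  then obtain p where p: "p \<noteq> 1" "\<phi> p < \<infinity>" by auto
  define m where "m = (p + 1) / 2"
  have "\<phi> (min p 1) < \<infinity>" "\<phi> (max p 1) < \<infinity>" "min p 1 < m" "m < max p 1"
    using p entropy_one unfolding m_def by (auto simp: min_def max_def)
  from entropy_subgradient[OF this] obtain s where "\<And>t. ereal (phi_real \<phi> m + s * (t - m)) \<le> \<phi> t"
    by blast
  then show ?thesis
    by (intro exI[of _ "phi_real \<phi> m - s * m"] exI[of _ s]) (simp add: algebra_simps)
next
  case False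
  then have "ereal (0 + 0 * t) \<le> \<phi> t" for t
    using entropy_one by (cases "t = 1") auto
  then show ?thesis by blast
qed

lemma entropy_tendsto_at_right_0: "(\<phi> \<longlongrightarrow> \<phi> 0) (at_right 0)"
  unfolding order_tendsto_iff
proof safe
  fix y assume y: "y < \<phi> 0"
  then have "\<forall>\<^sub>F x in at 0. y < \<phi> x"
    using le_Liminf_iff[THEN iffD1, rule_format, OF entropy_lsc y] by blast
  then show "\<forall>\<^sub>F x in at_right 0. y < \<phi> x" unfolding eventually_at_split by (rule conjunct2)
next
  fix u assume u: "\<phi> 0 < u"
  then have r: "\<phi> 0 = ereal (phi_real \<phi> 0)" by (intro entropy_eq_phi_real) auto
  \<comment> \<open>convexity between 0 and 1 bounds \<phi> on (0,1) by the chord (1 - t) \<phi>(0)\<close>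
  have chord: "\<phi> t \<le> ereal ((1 - t) * phi_real \<phi> 0)" if "0 < t" "t < 1" for t
    using entropy_convex[of t 0 1] that by (simp add: r entropy_one)
  have "\<forall>\<^sub>F t in at_right 0. ereal ((1 - t) * phi_real \<phi> 0) < u"
  proof -
    have "((\<lambda>t. (1 - t) * phi_real \<phi> 0) \<longlongrightarrow> (1 - 0) * phi_real \<phi> 0) (at_right 0)"
      by (intro tendsto_intros)
    then have "((\<lambda>t. ereal ((1 - t) * phi_real \<phi> 0)) \<longlongrightarrow> \<phi> 0) (at_right 0)"
      unfolding r by (intro tendsto_ereal) simp
    then show ?thesis using u by (rule order_tendstoD)
  qed
  moreover have "\<forall>\<^sub>F t in at_right (0::real). t \<in> {0<..<1}"
    by (rule eventually_at_right_real) simp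
  ultimately show "\<forall>\<^sub>F x in at_right 0. \<phi> x < u"
    by eventually_elim (use chord in \<open>auto intro: le_less_trans\<close>)
qed

lemma phi_conv_entropy: "phi_conv \<phi> = \<phi>"
  unfolding phi_conv_def using tendsto_Lim[OF _ entropy_tendsto_at_right_0] by (auto simp: fun_eq_iff)

lemma entropy_slope_from_one_mono:
  assumes fin: "\<And>t. 1 < t \<Longrightarrow> \<phi> t < \<infinity>" and st: "1 < s" "s \<le> t"
  shows "phi_real \<phi> s / (s - 1) \<le> phi_real \<phi> t / (t - 1)"
proof (cases "s = t")
  case False
  then have "(t - 1) * phi_real \<phi> s \<le> (t - s) * phi_real \<phi> 1 + (s - 1) * phi_real \<phi> t"
    using entropy_convex_between(2)[of 1 t s] entropy_one fin st by auto
  then show ?thesis using st entropy_one by (simp add: phi_real_def field_simps)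
qed simp

lemma phi_inf_neq_minf: "phi_inf \<phi> \<noteq> -\<infinity>"
proof (cases "\<exists>t0>1. \<phi> t0 = \<infinity>")
  case True
  then obtain t0 where t0: "t0 > 1" "\<phi> t0 = \<infinity>" by auto
  have "\<forall>\<^sub>F t in at_top. \<phi> t / ereal t = \<infinity>"
    using eventually_ge_at_top[of t0]
  proof eventually_elim
    case (elim t)
    then have "\<phi> t = \<infinity>" using entropy_dom_interval[of 1 t t0] entropy_one t0 by (auto simp: less_top)
    then show ?case using elim t0 by simp
  qed
  then have "((\<lambda>t. \<phi> t / ereal t) \<longlongrightarrow> \<infinity>) at_top" by (rule tendsto_eventually)
  then show ?thesis unfolding phi_inf_def by (subst tendsto_Lim) auto
next
  case False
  then have fin: "\<phi> t < \<infinity>" if "t > 1" for t using that by (auto simp: less_top)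
  define h where "h t = ereal (phi_real \<phi> t / (t - 1))" for t
  define L where "L = (SUP t\<in>{1<..}. h t)"
  have hL: "(h \<longlongrightarrow> L) at_top"
    unfolding L_def h_def using entropy_slope_from_one_mono[OF fin]
    by (intro tendsto_SUP_at_top_mono) auto
  have "((\<lambda>t. ereal ((t - 1) / t)) \<longlongrightarrow> ereal 1) at_top"
    by (intro tendsto_ereal) real_asymp
  from tendsto_mult_ereal[OF hL this] have "((\<lambda>t. h t * ereal ((t - 1) / t)) \<longlongrightarrow> L) at_top"
    by simp
  moreover have "\<forall>\<^sub>F t in at_top. h t * ereal ((t - 1) / t) = \<phi> t / ereal t"
    using eventually_gt_at_top[of 1]
    by eventually_elim (simp add: h_def entropy_eq_phi_real[OF fin])
  ultimately have "((\<lambda>t. \<phi> t / ereal t) \<longlongrightarrow> L) at_top" by (rule Lim_transform_eventually)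
  then have "phi_inf \<phi> = L" unfolding phi_inf_def by (intro tendsto_Lim) auto
  moreover have "h 2 \<le> L" unfolding L_def by (intro SUP_upper) auto
  ultimately show ?thesis by (auto simp: h_def)
qed

end

lemma entropy_borel_measurable:
  assumes "entropy_function \<phi>"
  shows "\<phi> \<in> borel_measurable borel"
proof (rule borel_measurableI_greater)
  fix y :: ereal
  have "open {x. y < \<phi> x}"
  proof (subst open_subopen, intro ballI)
    fix x assume "x \<in> {x. y < \<phi> x}"
    then have yx: "y < \<phi> x" by simp
    then have "\<forall>\<^sub>F z in at x. y < \<phi> z"
      using le_Liminf_iff[THEN iffD1, rule_format, OF entropy_lsc[OF assms] yx] by blast
    then obtain T where "open T" "x \<in> T" "\<forall>z\<in>T. z \<noteq> x \<longrightarrow> y < \<phi> z"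
      unfolding eventually_at_topological by auto
    then show "\<exists>T. open T \<and> x \<in> T \<and> T \<subseteq> {x. y < \<phi> x}" using yx by (intro exI[of _ T]) auto
  qed
  then show "{x \<in> space borel. y < \<phi> x} \<in> sets borel" by simp
qed

section \<open>Extended integrals\<close>

lemma enn2ereal_e2ennreal_max: "enn2ereal (e2ennreal x) = max 0 x"
  by (cases "x \<le> 0") (auto simp: e2ennreal_neg enn2ereal_e2ennreal max_def zero_ennreal.rep_eq)

lemma ereal_diff_add_split:
  fixes x y b c :: ereal
  assumes "0 \<le> x" "0 \<le> y" "0 \<le> b" "0 \<le> c" "b \<noteq> \<infinity>" "c \<noteq> \<infinity>"
  shows "(x + y) - (b + c) = (x - b) + (y - c)"
  using assms by (cases x y rule: ereal2_cases; cases b c rule: ereal2_cases) auto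

lemma enn2ereal_sum_diff:
  assumes "finite I" "\<forall>i\<in>I. b i \<noteq> \<top>"
  shows "enn2ereal (\<Sum>i\<in>I. a i) - enn2ereal (\<Sum>i\<in>I. b i) = (\<Sum>i\<in>I. enn2ereal (a i) - enn2ereal (b i))"
  using assms
proof (induction I rule: finite_induct)
  case empty then show ?case by (simp add: zero_ennreal.rep_eq)
next
  case (insert j I)
  have "enn2ereal (b j) \<noteq> \<infinity>" "enn2ereal (sum b I) \<noteq> \<infinity>"
    using insert by (auto simp: enn2ereal_eq_top_iff ennreal_sum_eq_top)
  then show ?case using insert
    by (simp add: plus_ennreal.rep_eq ereal_diff_add_split enn2ereal_nonneg)
qed

lemma ext_int_mono_AE:
  assumes "AE x in M. f x \<le> g x"
  shows "ext_int M f \<le> ext_int M g"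
  unfolding ext_int_def
proof (rule ereal_minus_mono)
  show "enn2ereal (\<integral>\<^sup>+ x. e2ennreal (f x) \<partial>M) \<le> enn2ereal (\<integral>\<^sup>+ x. e2ennreal (g x) \<partial>M)"
    using assms by (intro less_eq_ennreal.rep_eq[THEN iffD1]  nn_integral_mono_AE) (auto elim!: eventually_mono intro: e2ennreal_mono)
  show "enn2ereal (\<integral>\<^sup>+ x. e2ennreal (- g x) \<partial>M) \<le> enn2ereal (\<integral>\<^sup>+ x. e2ennreal (- f x) \<partial>M)"
    using assms by (intro less_eq_ennreal.rep_eq[THEN iffD1]  nn_integral_mono_AE) (auto elim!: eventually_mono intro: e2ennreal_mono)
qed

lemma ext_int_cong_AE:
  assumes "AE x in M. f x = g x"
  shows "ext_int M f = ext_int M g"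
  using ext_int_mono_AE[of f g M] ext_int_mono_AE[of g f M] assms
  by (metis (mono_tags, lifting) dual_order.eq_iff eventually_mono)

lemma ext_int_zero: "ext_int M (\<lambda>_. 0) = 0"
  unfolding ext_int_def by (simp add: zero_ennreal.rep_eq)

lemma ext_int_ereal:
  assumes "integrable M h"
  shows "ext_int M (\<lambda>x. ereal (h x)) = ereal (integral\<^sup>L M h)"
proof -
  have fin1: "(\<integral>\<^sup>+ x. ennreal (h x) \<partial>M) < \<top>"
    using integrableD(2)[OF assms] by (simp add: top.not_eq_extremum)
  have fin2: "(\<integral>\<^sup>+ x. ennreal (- h x) \<partial>M) < \<top>"
    using integrableD(3)[OF assms] by (simp add: top.not_eq_extremum)
  have "ext_int M (\<lambda>x. ereal (h x)) = enn2ereal (\<integral>\<^sup>+ x. ennreal (h x) \<partial>M) - enn2ereal (\<integral>\<^sup>+ x. ennreal (- h x) \<partial>M)"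
    unfolding ext_int_def by (simp add: e2ennreal_ereal)
  also have "\<dots> = ereal (enn2real (\<integral>\<^sup>+ x. ennreal (h x) \<partial>M)) - ereal (enn2real (\<integral>\<^sup>+ x. ennreal (- h x) \<partial>M))"
    using fin1 fin2 by (metis enn2ereal_ennreal enn2real_nonneg ennreal_enn2real)
  also have "\<dots> = ereal (integral\<^sup>L M h)" using real_lebesgue_integral_def[OF assms] by simp
  finally show ?thesis .
qed

lemma ext_int_distr:
  assumes "T \<in> measurable M N" "f \<in> borel_measurable N"
  shows "ext_int (distr M N T) f = ext_int M (\<lambda>x. f (T x))"
proof -
  have m1: "(\<lambda>x. e2ennreal (f x)) \<in> borel_measurable N"
    using measurable_compose[OF assms(2) measurable_e2ennreal] by simp
  have uminus_f: "(\<lambda>x. - f x) \<in> borel_measurable N" using assms(2) by measurable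
  have m2: "(\<lambda>x. e2ennreal (- f x)) \<in> borel_measurable N"
    using measurable_compose[OF uminus_f measurable_e2ennreal] by simp
  have m1': "(\<lambda>x. e2ennreal (f x)) \<in> borel_measurable (distr M N T)"
    using m1 by (simp add: measurable_cong_sets[OF sets_distr refl])
  have m2': "(\<lambda>x. e2ennreal (- f x)) \<in> borel_measurable (distr M N T)"
    using m2 by (simp add: measurable_cong_sets[OF sets_distr refl])
  show ?thesis unfolding ext_int_def
    using nn_integral_distr[OF assms(1) m1'] nn_integral_distr[OF assms(1) m2'] by simp
qed

lemma nn_integral_split_partition:
  assumes I: "finite I" and dis: "disjoint_family_on A I" and A: "\<And>i. i \<in> I \<Longrightarrow> A i \<in> sets M"
    and g: "g \<in> borel_measurable M" and cov: "AE x in M. x \<in> (\<Union>i\<in>I. A i)"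
  shows "(\<integral>\<^sup>+ x. g x \<partial>M) = (\<Sum>i\<in>I. \<integral>\<^sup>+ x. g x * indicator (A i) x \<partial>M)"
proof -
  have "(\<integral>\<^sup>+ x. g x \<partial>M) = (\<integral>\<^sup>+ x. (\<Sum>i\<in>I. g x * indicator (A i) x) \<partial>M)"
    using cov
  proof (intro nn_integral_cong_AE, eventually_elim)
    case (elim x)
    then obtain j where j: "j \<in> I" "x \<in> A j" by auto
    have "(\<Sum>i\<in>I. g x * indicator (A i) x) = (\<Sum>i\<in>{j}. g x * indicator (A i) x)"
      using dis j I by (intro sum.mono_neutral_right) (auto simp: disjoint_family_on_def indicator_def)
    then show ?case using j by simp
  qed
  also have "\<dots> = (\<Sum>i\<in>I. \<integral>\<^sup>+ x. g x * indicator (A i) x \<partial>M)"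
    using g A by (intro nn_integral_sum) auto
  finally show ?thesis .
qed

lemma ext_int_split:
  assumes I: "finite I" and dis: "disjoint_family_on A I" and A: "\<And>i. i \<in> I \<Longrightarrow> A i \<in> sets M"
    and f: "f \<in> borel_measurable M" and cov: "AE x in M. x \<in> (\<Union>i\<in>I. A i)"
    and neg: "\<And>i. i \<in> I \<Longrightarrow> (\<integral>\<^sup>+ x. e2ennreal (- f x) * indicator (A i) x \<partial>M) \<noteq> \<top>"
  shows "ext_int M f = (\<Sum>i\<in>I. ext_int M (\<lambda>x. if x \<in> A i then f x else 0))"
proof -
  have split: "(\<integral>\<^sup>+ x. e2ennreal (g x) \<partial>M) = (\<Sum>i\<in>I. \<integral>\<^sup>+ x. e2ennreal (g x) * indicator (A i) x \<partial>M)"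
    if "g \<in> borel_measurable M" for g :: "_ \<Rightarrow> ereal"
    using measurable_compose[OF that measurable_e2ennreal] by (intro nn_integral_split_partition[OF I dis A _ cov]) simp
  have ind: "(\<integral>\<^sup>+ x. e2ennreal (g x) * indicator (A i) x \<partial>M) = (\<integral>\<^sup>+ x. e2ennreal (if x \<in> A i then g x else 0) \<partial>M)"
    for g :: "_ \<Rightarrow> ereal" and i
    by (intro nn_integral_cong) (auto simp: indicator_def)
  have ind2: "(\<integral>\<^sup>+ x. e2ennreal (- f x) * indicator (A i) x \<partial>M) = (\<integral>\<^sup>+ x. e2ennreal (- (if x \<in> A i then f x else 0)) \<partial>M)"
    for i
    by (intro nn_integral_cong) (auto simp: indicator_def)
  have uminus_f: "(\<lambda>x. - f x) \<in> borel_measurable M" using f by measurable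
  have "ext_int M f = enn2ereal (\<Sum>i\<in>I. \<integral>\<^sup>+ x. e2ennreal (f x) * indicator (A i) x \<partial>M)
       - enn2ereal (\<Sum>i\<in>I. \<integral>\<^sup>+ x. e2ennreal (- f x) * indicator (A i) x \<partial>M)"
    unfolding ext_int_def using split[OF f] split[OF uminus_f] by simp
  also have "\<dots> = (\<Sum>i\<in>I. enn2ereal (\<integral>\<^sup>+ x. e2ennreal (f x) * indicator (A i) x \<partial>M)
       - enn2ereal (\<integral>\<^sup>+ x. e2ennreal (- f x) * indicator (A i) x \<partial>M))"
    using I neg by (intro enn2ereal_sum_diff) auto
  also have "\<dots> = (\<Sum>i\<in>I. ext_int M (\<lambda>x. if x \<in> A i then f x else 0))"
    unfolding ext_int_def ind2 ind ..
  finally show ?thesis .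
qed

lemma ext_int_const_on_set:
  assumes "A \<in> sets M" "emeasure M A \<noteq> \<infinity>" "c \<noteq> -\<infinity>"
  shows "ext_int M (\<lambda>x. if x \<in> A then c else 0) = ereal (measure M A) * c"
proof -
  have p: "(\<integral>\<^sup>+ x. e2ennreal (if x \<in> A then c else 0) \<partial>M) = e2ennreal c * emeasure M A"
    using assms by (subst nn_integral_cmult_indicator[symmetric]) (auto intro!: nn_integral_cong simp: indicator_def)
  have n: "(\<integral>\<^sup>+ x. e2ennreal (- (if x \<in> A then c else 0)) \<partial>M) = e2ennreal (- c) * emeasure M A"
    using assms by (subst nn_integral_cmult_indicator[symmetric]) (auto intro!: nn_integral_cong simp: indicator_def)
  have em: "enn2ereal (emeasure M A) = ereal (measure M A)"
    using assms by (simp add: emeasure_eq_ennreal_measure)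
  show ?thesis unfolding ext_int_def p n times_ennreal.rep_eq enn2ereal_e2ennreal_max em
    using assms(3) by (cases c) (auto simp: max_def)
qed

lemma finite_set_in_sets: "finite S \<Longrightarrow> (\<And>x. x \<in> S \<Longrightarrow> {x} \<in> sets M) \<Longrightarrow> S \<in> sets M"
  using sets.finite_UN[of S "\<lambda>x. {x}" M] by simp

lemma e2ennreal_uminus_neq_top: "c \<noteq> -\<infinity> \<Longrightarrow> e2ennreal (- c) \<noteq> \<top>"
  by (cases c) (auto simp: e2ennreal_neg)

lemma measurable_if_finite_set:
  assumes S: "finite S" "\<And>x. x \<in> S \<Longrightarrow> {x} \<in> sets M"
  shows "(\<lambda>y. if y \<in> S then K y else (c::'b::topological_space)) \<in> borel_measurable M"
proof (rule measurableI)
  fix A :: "'b set" assume "A \<in> sets borel"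
  have SM: "S \<inter> space M \<in> sets M"
  proof -
    have "S \<inter> space M = (\<Union>x\<in>S \<inter> space M. {x})" by auto
    also have "\<dots> \<in> sets M" using S by (intro sets.finite_UN) auto
    finally show ?thesis .
  qed
  have T: "(\<Union>x\<in>{x\<in>S. K x \<in> A} \<inter> space M. {x}) \<in> sets M"
    using S by (intro sets.finite_UN) auto
  have eq: "(\<lambda>y. if y \<in> S then K y else c) -` A \<inter> space M =
     (\<Union>x\<in>{x\<in>S. K x \<in> A} \<inter> space M. {x}) \<union> (if c \<in> A then space M - (S \<inter> space M) else {})"
    by (auto split: if_splits)
  show "(\<lambda>y. if y \<in> S then K y else c) -` A \<inter> space M \<in> sets M"
    unfolding eq using T SM by auto
qed simp

lemma ext_int_piecewise:
  assumes M: "finite_measure M" and S: "finite S" "S \<subseteq> space M" "\<And>x. x \<in> S \<Longrightarrow> {x} \<in> sets M"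
    and K: "\<And>x. x \<in> S \<Longrightarrow> K x \<noteq> -\<infinity>" and c: "c \<noteq> -\<infinity>"
  shows "ext_int M (\<lambda>y. if y \<in> S then K y else c)
     = (\<Sum>x\<in>S. ereal (measure M {x}) * K x) + ereal (measure M (space M - S)) * c"
proof -
  interpret finite_measure M by fact
  define f where "f = (\<lambda>y. if y \<in> S then K y else c)"
  define A where "A = (\<lambda>i. case i of Some x \<Rightarrow> {x} | None \<Rightarrow> space M - S)"
  define C where "C = (\<lambda>i. case i of Some x \<Rightarrow> K x | None \<Rightarrow> c)"
  define I where "I = insert None (Some ` S)"
  have SM: "S \<in> sets M" by (rule finite_set_in_sets[OF S(1,3)])
  have I: "finite I" unfolding I_def using S by auto
  have Asets: "A i \<in> sets M" if "i \<in> I" for i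
    using that S SM unfolding I_def A_def by auto
  have dis: "disjoint_family_on A I"
    unfolding disjoint_family_on_def I_def A_def by auto
  have fm: "f \<in> borel_measurable M" unfolding f_def by (rule measurable_if_finite_set) (use S in auto)
  have cov: "AE x in M. x \<in> (\<Union>i\<in>I. A i)"
    by (rule AE_I2) (auto simp: I_def A_def)
  have onA: "\<forall>x\<in>space M. (if x \<in> A i then f x else 0) = (if x \<in> A i then C i else 0)" if "i \<in> I" for i
    using that unfolding I_def A_def C_def f_def by auto
  have Cn: "C i \<noteq> -\<infinity>" if "i \<in> I" for i using that K c unfolding I_def C_def by auto
  have neg: "(\<integral>\<^sup>+ x. e2ennreal (- f x) * indicator (A i) x \<partial>M) \<noteq> \<top>" if i: "i \<in> I" for i
  proof -
    have "(\<integral>\<^sup>+ x. e2ennreal (- f x) * indicator (A i) x \<partial>M) = (\<integral>\<^sup>+ x. e2ennreal (- C i) * indicator (A i) x \<partial>M)"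
      using onA[OF i] by (intro nn_integral_cong) (auto simp: indicator_def split: if_splits)
    also have "\<dots> = e2ennreal (- C i) * emeasure M (A i)" using Asets[OF i] by (rule nn_integral_cmult_indicator)
    also have "\<dots> \<noteq> \<top>"
      using e2ennreal_uminus_neq_top[OF Cn[OF i]] emeasure_finite[of "A i"] by (simp add: ennreal_mult_eq_top_iff)
    finally show ?thesis .
  qed
  have "ext_int M f = (\<Sum>i\<in>I. ext_int M (\<lambda>x. if x \<in> A i then f x else 0))"
    by (rule ext_int_split[OF I dis Asets fm cov neg])
  also have "\<dots> = (\<Sum>i\<in>I. ereal (measure M (A i)) * C i)"
  proof (rule sum.cong[OF refl])
    fix i assume i: "i \<in> I"
    have "ext_int M (\<lambda>x. if x \<in> A i then f x else 0) = ext_int M (\<lambda>x. if x \<in> A i then C i else 0)"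
      using onA[OF i] by (intro ext_int_cong_AE AE_I2) auto
    also have "\<dots> = ereal (measure M (A i)) * C i"
      using Asets[OF i] Cn[OF i] by (intro ext_int_const_on_set) auto
    finally show "ext_int M (\<lambda>x. if x \<in> A i then f x else 0) = ereal (measure M (A i)) * C i" .
  qed
  also have "\<dots> = ereal (measure M (space M - S)) * c + (\<Sum>i\<in>Some ` S. ereal (measure M (A i)) * C i)"
    unfolding I_def using S by (subst sum.insert) (auto simp: A_def C_def)
  also have "(\<Sum>i\<in>Some ` S. ereal (measure M (A i)) * C i) = (\<Sum>x\<in>S. ereal (measure M {x}) * K x)"
    by (subst sum.reindex) (auto simp: A_def C_def)
  finally show ?thesis unfolding f_def by (simp add: add.commute)
qed

lemma ext_int_finite_support:
  assumes M: "finite_measure M" and S: "finite S" "S \<subseteq> space M" "\<And>x. x \<in> S \<Longrightarrow> {x} \<in> sets M"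
    and null: "emeasure M (space M - S) = 0"
    and K: "\<And>x. x \<in> S \<Longrightarrow> f x \<noteq> -\<infinity>"
  shows "ext_int M f = (\<Sum>x\<in>S. ereal (measure M {x}) * f x)"
proof -
  interpret finite_measure M by fact
  have SM: "S \<in> sets M" by (rule finite_set_in_sets[OF S(1,3)])
  have "AE x in M. x \<in> S"
    using null SM by (subst AE_iff_measurable[of "space M - S"]) auto
  then have "ext_int M f = ext_int M (\<lambda>y. if y \<in> S then f y else 0)"
    by (intro ext_int_cong_AE) (auto elim!: eventually_mono)
  also have "\<dots> = (\<Sum>x\<in>S. ereal (measure M {x}) * f x) + ereal (measure M (space M - S)) * 0"
    by (rule ext_int_piecewise[OF M S K]) auto
  finally show ?thesis by simp
qed

lemma sum_meas_measure:
  assumes "sets N = sets M"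
  shows "sets (sum_meas M N) = sets M" "space (sum_meas M N) = space M"
    "A \<in> sets M \<Longrightarrow> emeasure (sum_meas M N) A = emeasure M A + emeasure N A"
proof -
  show "sets (sum_meas M N) = sets M" unfolding sum_meas_def by (simp add: sets.sets_measure_of_eq)
  show "space (sum_meas M N) = space M" unfolding sum_meas_def by (simp add: sets.space_measure_of_eq)
  assume A: "A \<in> sets M"
  have pos: "positive (sets M) (\<lambda>A. emeasure M A + emeasure N A)"
    unfolding positive_def by simp
  have ca: "countably_additive (sets M) (\<lambda>A. emeasure M A + emeasure N A)"
  proof (rule countably_additiveI)
    fix F :: "nat \<Rightarrow> _" assume F: "range F \<subseteq> sets M" "disjoint_family F" "\<Union> (range F) \<in> sets M"
    have "(\<Sum>i. emeasure M (F i) + emeasure N (F i)) = (\<Sum>i. emeasure M (F i)) + (\<Sum>i. emeasure N (F i))"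
      by (rule suminf_add[symmetric]) auto
    also have "\<dots> = emeasure M (\<Union> (range F)) + emeasure N (\<Union> (range F))"
      using F assms by (simp add: suminf_emeasure)
    finally show "(\<Sum>i. emeasure M (F i) + emeasure N (F i)) = emeasure M (\<Union> (range F)) + emeasure N (\<Union> (range F))" .
  qed
  show "emeasure (sum_meas M N) A = emeasure M A + emeasure N A"
    unfolding sum_meas_def by (rule emeasure_measure_of_sigma[OF sets.sigma_algebra_axioms pos ca A])
qed

lemma singleton_borel: "{x} \<in> sets (borel :: 'a::t1_space measure)"
  by (simp add: closed_singleton)

lemma finite_borel: "finite A \<Longrightarrow> A \<in> sets (borel :: 'a::t1_space measure)"
  by (simp add: finite_imp_closed)

lemma emeasure_density_if_finite_set:
  fixes M :: "'a::t1_space measure"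
  assumes M: "sets M = sets borel" and S: "finite S" and A: "A \<in> sets borel"
  shows "emeasure (density M (\<lambda>x. if x \<in> S then c x else d)) A
     = (\<Sum>x\<in>S \<inter> A. c x * emeasure M {x}) + d * emeasure M (A - S)"
proof -
  have sing: "{x} \<in> sets M" for x using M singleton_borel by auto
  have gm: "(\<lambda>x. if x \<in> S then c x else d) \<in> borel_measurable M"
    by (rule measurable_if_finite_set) (use S sing in auto)
  have AM: "A \<in> sets M" using A M by simp
  have SM: "S \<in> sets M" using S sing by (rule finite_set_in_sets)
  have "emeasure (density M (\<lambda>x. if x \<in> S then c x else d)) A
      = (\<integral>\<^sup>+ x. (if x \<in> S then c x else d) * indicator A x \<partial>M)"
    using gm AM by (rule emeasure_density)
  also have "\<dots> = (\<integral>\<^sup>+ x. (\<Sum>y\<in>S \<inter> A. c y * indicator {y} x) + d * indicator (A - S) x \<partial>M)"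
  proof (rule nn_integral_cong)
    fix x
    show "(if x \<in> S then c x else d) * indicator A x = (\<Sum>y\<in>S \<inter> A. c y * indicator {y} x) + d * indicator (A - S) x"
    proof (cases "x \<in> S \<inter> A")
      case True
      then have "(\<Sum>y\<in>S \<inter> A. c y * indicator {y} x) = (\<Sum>y\<in>{x}. c y * indicator {y} x)"
        using S by (intro sum.mono_neutral_right) auto
      then show ?thesis using True by simp
    next
      case False
      then have "(\<Sum>y\<in>S \<inter> A. c y * indicator {y} x) = 0" by (intro sum.neutral) (auto simp: indicator_def)
      then show ?thesis using False by (auto simp: indicator_def)
    qed
  qed
  also have "\<dots> = (\<integral>\<^sup>+ x. (\<Sum>y\<in>S \<inter> A. c y * indicator {y} x) \<partial>M) + (\<integral>\<^sup>+ x. d * indicator (A - S) x \<partial>M)"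
    using sing AM SM by (intro nn_integral_add) auto
  also have "(\<integral>\<^sup>+ x. (\<Sum>y\<in>S \<inter> A. c y * indicator {y} x) \<partial>M) = (\<Sum>y\<in>S \<inter> A. \<integral>\<^sup>+ x. c y * indicator {y} x \<partial>M)"
    using sing by (intro nn_integral_sum) auto
  also have "\<dots> = (\<Sum>y\<in>S \<inter> A. c y * emeasure M {y})"
    using sing by (intro sum.cong refl nn_integral_cmult_indicator) auto
  also have "(\<integral>\<^sup>+ x. d * indicator (A - S) x \<partial>M) = d * emeasure M (A - S)"
    using AM SM by (intro nn_integral_cmult_indicator) auto
  finally show ?thesis .
qed

lemma ext_int_eq_infinity:
  assumes B: "B \<in> sets M" "emeasure M B > 0" and f: "\<And>y. y \<in> B \<Longrightarrow> f y = \<infinity>"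
  shows "ext_int M f = \<infinity>"
proof -
  have "\<top> * emeasure M B \<le> (\<integral>\<^sup>+ y. e2ennreal (f y) \<partial>M)"
    unfolding nn_integral_cmult_indicator[OF B(1), symmetric]
    by (intro nn_integral_mono) (auto simp: indicator_def f)
  then have "(\<integral>\<^sup>+ y. e2ennreal (f y) \<partial>M) = \<top>" using B(2) by (auto simp: ennreal_top_mult top_unique split: if_splits)
  then show ?thesis unfolding ext_int_def by simp
qed

lemma e2ennreal_mult_ereal: "0 < c \<Longrightarrow> e2ennreal (x * ereal c) = e2ennreal x * ennreal c"
proof -
  assume c: "0 < c"
  have "enn2ereal (e2ennreal (x * ereal c)) = enn2ereal (e2ennreal x * ennreal c)"
    unfolding enn2ereal_e2ennreal_max times_ennreal.rep_eq using c
    by (cases x) (auto simp: enn2ereal_ennreal max_def zero_le_mult_iff mult_le_0_iff)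
  then show ?thesis by (metis enn2ereal_inverse e2ennreal_enn2ereal)
qed

lemma ext_int_cmult:
  assumes c: "0 < c" and fm: "f \<in> borel_measurable M"
  shows "ext_int M (\<lambda>y. f y * ereal c) = ext_int M f * ereal c"
proof -
  have m1: "(\<lambda>y. e2ennreal (f y)) \<in> borel_measurable M" using measurable_compose[OF fm measurable_e2ennreal] by simp
  have m2: "(\<lambda>y. e2ennreal (- f y)) \<in> borel_measurable M"
    using measurable_compose[OF borel_measurable_uminus_ereal[OF fm] measurable_e2ennreal] by simp
  have p: "(\<integral>\<^sup>+ y. e2ennreal (f y * ereal c) \<partial>M) = (\<integral>\<^sup>+ y. e2ennreal (f y) \<partial>M) * ennreal c"
    using c by (simp add: e2ennreal_mult_ereal nn_integral_multc[OF m1])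
  have n: "(\<integral>\<^sup>+ y. e2ennreal (- (f y * ereal c)) \<partial>M) = (\<integral>\<^sup>+ y. e2ennreal (- f y) \<partial>M) * ennreal c"
  proof -
    have "(\<integral>\<^sup>+ y. e2ennreal (- (f y * ereal c)) \<partial>M) = (\<integral>\<^sup>+ y. e2ennreal ((- f y) * ereal c) \<partial>M)" by simp
    also have "\<dots> = (\<integral>\<^sup>+ y. e2ennreal (- f y) * ennreal c \<partial>M)" by (intro nn_integral_cong) (rule e2ennreal_mult_ereal[OF c])
    also have "\<dots> = (\<integral>\<^sup>+ y. e2ennreal (- f y) \<partial>M) * ennreal c" by (rule nn_integral_multc[OF m2])
    finally show ?thesis .
  qed
  have e: "x * ereal c - y * ereal c = (x - y) * ereal c" if "0 \<le> x" "0 \<le> y" for x y :: ereal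
    using that c by (cases x; cases y) (auto simp: algebra_simps)
  show ?thesis unfolding ext_int_def p n times_ennreal.rep_eq using c
    by (simp add: enn2ereal_ennreal e enn2ereal_nonneg)
qed

lemma AE_eq_mean_if_AE_le:
  fixes X :: "'a \<Rightarrow> real"
  assumes M: "finite_measure M" and A: "A \<in> sets M"
    and Xi: "integrable M (\<lambda>y. X y * indicator A y)"
    and mean: "(\<integral> y. X y * indicator A y \<partial>M) = measure M A * m"
    and le: "AE y in M. y \<in> A \<longrightarrow> X y \<le> m"
  shows "AE y in M. y \<in> A \<longrightarrow> X y = m"
proof -
  interpret finite_measure M by fact
  define f where "f y = m * indicator A y - X y * indicator A y" for y
  have indi: "integrable M (indicator A :: _ \<Rightarrow> real)"
    using A by (simp add: integrable_indicator_iff emeasure_eq_measure)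
  have fi: "integrable M f" unfolding f_def using indi Xi by simp
  have "(\<integral> y. f y \<partial>M) = 0" unfolding f_def using indi Xi A mean by simp
  moreover have "AE y in M. 0 \<le> f y" using le by eventually_elim (auto simp: f_def indicator_def)
  ultimately have "AE y in M. f y = 0" using integral_nonneg_eq_0_iff_AE[OF fi] by simp
  then show ?thesis by eventually_elim (auto simp: f_def)
qed

lemma AE_eq_mean_if_AE_ge:
  fixes X :: "'a \<Rightarrow> real"
  assumes M: "finite_measure M" and A: "A \<in> sets M"
    and Xi: "integrable M (\<lambda>y. X y * indicator A y)"
    and mean: "(\<integral> y. X y * indicator A y \<partial>M) = measure M A * m"
    and ge: "AE y in M. y \<in> A \<longrightarrow> m \<le> X y"
  shows "AE y in M. y \<in> A \<longrightarrow> X y = m"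
proof -
  have "AE y in M. y \<in> A \<longrightarrow> - X y = - m"
    using M A Xi mean ge by (intro AE_eq_mean_if_AE_le) auto
  then show ?thesis by eventually_elim simp
qed

lemma ext_int_eq_infinity_if_not_AE:
  assumes B: "{y \<in> space M. f y = \<infinity>} \<in> sets M" and not_AE: "\<not> (AE y in M. f y < \<infinity>)"
  shows "ext_int M f = \<infinity>"
proof (rule ext_int_eq_infinity[OF B])
  show "emeasure M {y \<in> space M. f y = \<infinity>} > 0"
  proof (rule ccontr)
    assume "\<not> emeasure M {y \<in> space M. f y = \<infinity>} > 0"
    then have "AE y in M. y \<notin> {y \<in> space M. f y = \<infinity>}"
      using B by (intro AE_not_in) (simp add: null_sets_def not_gr_zero)
    then have "AE y in M. f y < \<infinity>" using AE_space by eventually_elim (auto simp: less_top)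
    with not_AE show False ..
  qed
qed simp

context
  fixes \<phi> :: "real \<Rightarrow> ereal" and M :: "'a measure" and A :: "'a set" and X :: "'a \<Rightarrow> real"
  assumes ef: "entropy_function \<phi>" and M: "finite_measure M" and A: "A \<in> sets M"
    and pos: "measure M A > 0" and X: "X \<in> borel_measurable M"
    and Xi: "integrable M (\<lambda>y. X y * indicator A y)"
begin

lemma ext_int_jensen_interior:
  assumes mean: "(\<integral> y. X y * indicator A y \<partial>M) = measure M A * m"
    and dom: "\<phi> t1 < \<infinity>" "\<phi> t2 < \<infinity>" "t1 < m" "m < t2"
  shows "ereal (measure M A) * \<phi> m \<le> ext_int M (\<lambda>y. if y \<in> A then \<phi> (X y) else 0)"
proof -
  interpret finite_measure M by fact
  obtain s where s: "\<And>t. ereal (phi_real \<phi> m + s * (t - m)) \<le> \<phi> t"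
    using entropy_subgradient[OF ef dom] by blast
  have phim: "\<phi> m = ereal (phi_real \<phi> m)"
    using entropy_eq_phi_real[OF ef entropy_convex_between(1)[OF ef dom]] .
  define g where "g y = (phi_real \<phi> m - s * m) * indicator A y + s * (X y * indicator A y)" for y
  have indi: "integrable M (indicator A :: _ \<Rightarrow> real)"
    using A by (simp add: integrable_indicator_iff emeasure_eq_measure)
  have gi: "integrable M g" unfolding g_def using indi Xi by simp
  have "(\<integral> y. g y \<partial>M) = measure M A * phi_real \<phi> m"
    unfolding g_def using indi Xi A mean by (simp add: algebra_simps)
  then have "ereal (measure M A) * \<phi> m = ext_int M (\<lambda>y. ereal (g y))"
    using ext_int_ereal[OF gi] phim by simp
  also have "\<dots> \<le> ext_int M (\<lambda>y. if y \<in> A then \<phi> (X y) else 0)"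
  proof (intro ext_int_mono_AE AE_I2)
    fix y
    have "g y = (phi_real \<phi> m + s * (X y - m)) * indicator A y"
      unfolding g_def by (simp add: algebra_simps)
    then show "ereal (g y) \<le> (if y \<in> A then \<phi> (X y) else 0)"
      using s[of "X y"] by (simp add: indicator_def)
  qed
  finally show ?thesis .
qed

lemma ext_int_jensen:
  "ereal (measure M A) * \<phi> ((\<integral> y. X y * indicator A y \<partial>M) / measure M A)
     \<le> ext_int M (\<lambda>y. if y \<in> A then \<phi> (X y) else 0)"
proof -
  define m where "m = (\<integral> y. X y * indicator A y \<partial>M) / measure M A"
  have mean: "(\<integral> y. X y * indicator A y \<partial>M) = measure M A * m" unfolding m_def using pos by simp
  have "ereal (measure M A) * \<phi> m \<le> ext_int M (\<lambda>y. if y \<in> A then \<phi> (X y) else 0)"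
  proof (cases "(\<exists>t1<m. \<phi> t1 < \<infinity>) \<and> (\<exists>t2>m. \<phi> t2 < \<infinity>)")
    case True
    then obtain t1 t2 where "\<phi> t1 < \<infinity>" "\<phi> t2 < \<infinity>" "t1 < m" "m < t2" by blast
    then show ?thesis by (rule ext_int_jensen_interior[OF mean])
  next
    case False
    then have side: "(\<forall>t<m. \<phi> t = \<infinity>) \<or> (\<forall>t>m. \<phi> t = \<infinity>)"
      using less_top by blast
    have B: "{y \<in> space M. (if y \<in> A then \<phi> (X y) else 0) = \<infinity>} \<in> sets M"
      using A X entropy_borel_measurable[OF ef] by measurable
    show ?thesis
    proof (cases "AE y in M. (if y \<in> A then \<phi> (X y) else 0) < \<infinity>")
      case fin: True
      \<comment> \<open>\<open>\<phi>\<close> is infinite on one side of the mean, so X cannot leave m on A\<close>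
      have "AE y in M. y \<in> A \<longrightarrow> X y = m"
        using side
      proof
        assume side: "\<forall>t<m. \<phi> t = \<infinity>"
        from fin have "AE y in M. y \<in> A \<longrightarrow> m \<le> X y"
          by eventually_elim (use side in \<open>auto intro!: leI\<close>)
        then show ?thesis by (rule AE_eq_mean_if_AE_ge[OF M A Xi mean])
      next
        assume side: "\<forall>t>m. \<phi> t = \<infinity>"
        from fin have "AE y in M. y \<in> A \<longrightarrow> X y \<le> m"
          by eventually_elim (use side in \<open>auto intro!: leI\<close>)
        then show ?thesis by (rule AE_eq_mean_if_AE_le[OF M A Xi mean])
      qed
      then have "ext_int M (\<lambda>y. if y \<in> A then \<phi> (X y) else 0) = ext_int M (\<lambda>y. if y \<in> A then \<phi> m else 0)"
        by (intro ext_int_cong_AE) (auto elim!: eventually_mono)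
      also have "\<dots> = ereal (measure M A) * \<phi> m"
        using A entropy_neq_minf[OF ef] finite_measure.emeasure_finite[OF M]
        by (intro ext_int_const_on_set) auto
      finally show ?thesis by simp
    next
      case False
      then show ?thesis using ext_int_eq_infinity_if_not_AE[OF B] by simp
    qed
  qed
  then show ?thesis by (simp add: m_def)
qed

end

section \<open>Finitely supported measures\<close>

definition pmf_borel :: "'b::t1_space pmf \<Rightarrow> 'b measure" where
  "pmf_borel Q = distr (measure_pmf Q) borel (\<lambda>x. x)"

lemma sets_pmf_borel[simp]: "sets (pmf_borel Q) = sets borel" and space_pmf_borel[simp]: "space (pmf_borel Q) = UNIV"
  unfolding pmf_borel_def by auto

lemma prob_space_pmf_borel: "prob_space (pmf_borel Q)"
  unfolding pmf_borel_def by (rule prob_space.prob_space_distr[OF prob_space_measure_pmf]) auto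

lemma finite_measure_pmf_borel: "finite_measure (pmf_borel Q)"
  using prob_space_pmf_borel unfolding prob_space_def by blast

lemma emeasure_pmf_borel: "A \<in> sets borel \<Longrightarrow> emeasure (pmf_borel Q) A = emeasure (measure_pmf Q) A"
  unfolding pmf_borel_def by (subst emeasure_distr) auto

lemma measure_pmf_borel_singleton: "measure (pmf_borel Q) {y} = pmf Q y"
  using emeasure_pmf_borel[of "{y}" Q] singleton_borel unfolding measure_def by (simp add: emeasure_pmf_single)

lemma emeasure_pmf_borel_outside: 
  assumes "finite F" "set_pmf Q \<subseteq> F" shows "emeasure (pmf_borel Q) (UNIV - F) = 0"
proof -
  have "AE x in measure_pmf Q. x \<notin> UNIV - F"
    using AE_measure_pmf[of Q] by (rule eventually_mono) (use assms in auto)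
  then have "emeasure (measure_pmf Q) (UNIV - F) = 0"
    by (subst AE_iff_measurable[symmetric, where P="\<lambda>x. x \<notin> UNIV - F"]) auto
  then show ?thesis using emeasure_pmf_borel[of "UNIV - F" Q] finite_borel[OF assms(1)] by simp
qed

lemma distr_pmf_borel:
  assumes "f \<in> borel_measurable borel"
  shows "distr (pmf_borel Q) borel f = pmf_borel (map_pmf f Q)"
proof (rule measure_eqI)
  show "sets (distr (pmf_borel Q) borel f) = sets (pmf_borel (map_pmf f Q))" by simp
  fix A assume A: "A \<in> sets (distr (pmf_borel Q) borel f)"
  then have "emeasure (distr (pmf_borel Q) borel f) A = emeasure (pmf_borel Q) (f -` A)"
    using assms by (subst emeasure_distr) (auto simp: measurable_cong_sets[OF sets_pmf_borel refl])
  also have "\<dots> = emeasure (measure_pmf Q) (f -` A)"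
    using A assms by (intro emeasure_pmf_borel) (auto dest: measurable_sets_borel)
  also have "\<dots> = emeasure (pmf_borel (map_pmf f Q)) A"
    using A by (subst emeasure_pmf_borel) (auto simp: map_pmf_rep_eq emeasure_distr)
  finally show "emeasure (distr (pmf_borel Q) borel f) A = emeasure (pmf_borel (map_pmf f Q)) A" .
qed

lemma ext_int_pmf_borel:
  assumes "finite F" "set_pmf Q \<subseteq> F" "\<And>y. y \<in> F \<Longrightarrow> f y \<noteq> -\<infinity>"
  shows "ext_int (pmf_borel Q) f = (\<Sum>y\<in>F. ereal (pmf Q y) * f y)"
proof -
  have "ext_int (pmf_borel Q) f = (\<Sum>y\<in>F. ereal (measure (pmf_borel Q) {y}) * f y)"
    by (rule ext_int_finite_support[OF finite_measure_pmf_borel assms(1)]) (use emeasure_pmf_borel_outside[OF assms(1,2)] assms(3) singleton_borel in auto)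
  then show ?thesis by (simp add: measure_pmf_borel_singleton)
qed

lemma density_if_finite_set_eq:
  fixes \<rho> M :: "'a::t1_space measure"
  assumes \<rho>: "finite_measure \<rho>" "sets \<rho> = sets borel" and M: "finite_measure M" "sets M = sets borel"
    and S: "finite S" "\<And>x. x \<in> S \<Longrightarrow> measure \<rho> {x} > 0"
    and outside: "\<And>A. A \<in> sets borel \<Longrightarrow> emeasure M (A - S) = d * emeasure \<rho> (A - S)"
  shows "density \<rho> (\<lambda>x. if x \<in> S then ennreal (measure M {x} / measure \<rho> {x}) else d) = M"
proof (rule measure_eqI)
  show "sets (density \<rho> (\<lambda>x. if x \<in> S then ennreal (measure M {x} / measure \<rho> {x}) else d)) = sets M"
    using \<rho> M by simp
  fix A assume "A \<in> sets (density \<rho> (\<lambda>x. if x \<in> S then ennreal (measure M {x} / measure \<rho> {x}) else d))"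
  then have A: "A \<in> sets borel" using \<rho> by simp
  have atom: "ennreal (measure M {x} / measure \<rho> {x}) * emeasure \<rho> {x} = emeasure M {x}" if "x \<in> S" for x
    using S(2)[OF that] finite_measure.emeasure_eq_measure[OF \<rho>(1)] finite_measure.emeasure_eq_measure[OF M(1)]
    by (simp add: ennreal_mult[symmetric])
  have "emeasure (density \<rho> (\<lambda>x. if x \<in> S then ennreal (measure M {x} / measure \<rho> {x}) else d)) A
      = (\<Sum>x\<in>S \<inter> A. emeasure M {x}) + emeasure M (A - S)"
    using emeasure_density_if_finite_set[OF \<rho>(2) S(1) A] atom outside[OF A] by simp
  also have "(\<Sum>x\<in>S \<inter> A. emeasure M {x}) = emeasure M (S \<inter> A)"
    using M(2) S(1) singleton_borel by (intro emeasure_eq_sum_singleton[symmetric]) auto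
  also have "emeasure M (S \<inter> A) + emeasure M (A - S) = emeasure M A"
    using M(2) A finite_borel[OF S(1)] by (subst plus_emeasure) (auto intro!: arg_cong[where f="emeasure M"])
  finally show "emeasure (density \<rho> (\<lambda>x. if x \<in> S then ennreal (measure M {x} / measure \<rho> {x}) else d)) A = emeasure M A" .
qed

definition ot_couplings ::
  "('a::euclidean_space \<times> real) measure \<Rightarrow> ('a \<times> real) measure \<Rightarrow> (('a \<times> real) \<times> ('a \<times> real)) measure set" where
  "ot_couplings \<nu> \<nu>h = {\<pi>. prob_space \<pi> \<and> sets \<pi> = sets borel \<and>
      distr \<pi> borel fst = \<nu> \<and> distr \<pi> borel snd = \<nu>h \<and> (\<integral>\<^sup>+ x. ennreal (snd (fst x)) \<partial>\<pi>) = 1}"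

lemma OT_disc_eq_INF_couplings:
  "OT_disc c \<nu> \<nu>h = (INF \<pi>\<in>ot_couplings \<nu> \<nu>h. ext_int \<pi> (\<lambda>x. c (fst x) (snd x)))"
  unfolding OT_disc_def ot_couplings_def ..

context
  fixes \<phi> :: "real \<Rightarrow> ereal" and \<mu> \<mu>h :: "'a::t1_space measure" and S :: "'a set"
  assumes ef: "entropy_function \<phi>"
    and \<mu>: "prob_space \<mu>" "sets \<mu> = sets borel" and \<mu>h: "prob_space \<mu>h" "sets \<mu>h = sets borel"
    and S: "finite S" "\<And>x. x \<in> S \<Longrightarrow> measure \<mu>h {x} > 0"
    and \<mu>h_outside: "emeasure \<mu>h (UNIV - S) = 0"
begin

lemma sum_meas_prob_spaces:
  shows "sets (sum_meas \<mu> \<mu>h) = sets borel" and "finite_measure (sum_meas \<mu> \<mu>h)"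
    and "\<And>A. A \<in> sets borel \<Longrightarrow> emeasure (sum_meas \<mu> \<mu>h) A = emeasure \<mu> A + emeasure \<mu>h A"
    and "\<And>A. A \<in> sets borel \<Longrightarrow> measure (sum_meas \<mu> \<mu>h) A = measure \<mu> A + measure \<mu>h A"
proof -
  have sp: "space \<mu> = UNIV" "space \<mu>h = UNIV"
    using sets_eq_imp_space_eq[OF \<mu>(2)] sets_eq_imp_space_eq[OF \<mu>h(2)] by auto
  show sets: "sets (sum_meas \<mu> \<mu>h) = sets borel" using sum_meas_measure(1)[of \<mu>h \<mu>] \<mu>(2) \<mu>h(2) by simp
  show em: "emeasure (sum_meas \<mu> \<mu>h) A = emeasure \<mu> A + emeasure \<mu>h A" if "A \<in> sets borel" for A
    using sum_meas_measure(3)[of \<mu>h \<mu> A] \<mu>(2) \<mu>h(2) that by simp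
  show fin: "finite_measure (sum_meas \<mu> \<mu>h)"
    using em[of UNIV] sum_meas_measure(2)[of \<mu>h \<mu>] \<mu>(2) \<mu>h(2) sp
      prob_space.emeasure_space_1[OF \<mu>(1)] prob_space.emeasure_space_1[OF \<mu>h(1)]
    by (intro finite_measureI) simp
  show "measure (sum_meas \<mu> \<mu>h) A = measure \<mu> A + measure \<mu>h A" if "A \<in> sets borel" for A
    using em[OF that] finite_measure.emeasure_eq_measure[OF fin]
      finite_measure.emeasure_eq_measure[OF prob_space.axioms(1)[OF \<mu>(1)]]
      finite_measure.emeasure_eq_measure[OF prob_space.axioms(1)[OF \<mu>h(1)]]
    by (simp add: ennreal_plus[symmetric] del: ennreal_plus)
qed

lemma RN_deriv_sum_meas_atoms:
  defines "\<rho> \<equiv> sum_meas \<mu> \<mu>h"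
  shows "AE x in \<rho>. (if x \<in> S then ennreal (measure \<mu> {x} / measure \<rho> {x}) else 1) = RN_deriv \<rho> \<mu> x"
    and "AE x in \<rho>. (if x \<in> S then ennreal (measure \<mu>h {x} / measure \<rho> {x}) else 0) = RN_deriv \<rho> \<mu>h x"
proof -
  note \<rho> = sum_meas_prob_spaces[folded \<rho>_def]
  interpret rho: finite_measure \<rho> by (rule \<rho>(2))
  have pos: "measure \<rho> {x} > 0" if "x \<in> S" for x
    using \<rho>(4)[of "{x}"] S(2)[OF that] singleton_borel by (simp add: add_nonneg_pos)
  have null: "emeasure \<mu>h (A - S) = 0" if "A \<in> sets borel" for A
    using \<mu>h(2) that finite_borel[OF S(1)] \<mu>h_outside by (intro emeasure_eq_0[of "UNIV - S" _ "A - S"]) auto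
  have sing: "{x} \<in> sets \<rho>" for x using \<rho>(1) singleton_borel by simp
  have "density \<rho> (\<lambda>x. if x \<in> S then ennreal (measure \<mu> {x} / measure \<rho> {x}) else 1) = \<mu>"
  proof (rule density_if_finite_set_eq[OF \<rho>(2,1) prob_space.axioms(1)[OF \<mu>(1)] \<mu>(2) S(1) pos])
    fix A :: "'a set" assume "A \<in> sets borel"
    then show "emeasure \<mu> (A - S) = 1 * emeasure \<rho> (A - S)"
      using \<rho>(3)[of "A - S"] null finite_borel[OF S(1)] by auto
  qed
  then show "AE x in \<rho>. (if x \<in> S then ennreal (measure \<mu> {x} / measure \<rho> {x}) else 1) = RN_deriv \<rho> \<mu> x"
    using sing by (intro rho.RN_deriv_unique measurable_if_finite_set S(1))
  have "density \<rho> (\<lambda>x. if x \<in> S then ennreal (measure \<mu>h {x} / measure \<rho> {x}) else 0) = \<mu>h"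
    by (rule density_if_finite_set_eq[OF \<rho>(2,1) prob_space.axioms(1)[OF \<mu>h(1)] \<mu>h(2) S(1) pos])
      (use null in auto)
  then show "AE x in \<rho>. (if x \<in> S then ennreal (measure \<mu>h {x} / measure \<rho> {x}) else 0) = RN_deriv \<rho> \<mu>h x"
    using sing by (intro rho.RN_deriv_unique measurable_if_finite_set S(1))
qed

lemma phi_div_finite_reference:
  "phi_div \<phi> \<mu> \<mu>h = (\<Sum>x\<in>S. ereal (measure \<mu>h {x}) * \<phi> (measure \<mu> {x} / measure \<mu>h {x}))
     + ereal (measure \<mu> (UNIV - S)) * phi_inf \<phi>"
proof -
  define \<rho> where "\<rho> = sum_meas \<mu> \<mu>h"
  note \<rho> = sum_meas_prob_spaces[folded \<rho>_def]
  have pos: "measure \<rho> {x} > 0" if "x \<in> S" for x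
    using \<rho>(4)[of "{x}"] S(2)[OF that] singleton_borel by (simp add: add_nonneg_pos)
  define K where "K x = ereal (measure \<mu>h {x} / measure \<rho> {x}) * \<phi> (measure \<mu> {x} / measure \<mu>h {x})" for x
  have integrand: "AE x in \<rho>. div_integrand \<phi> (RN_deriv \<rho> \<mu> x) (RN_deriv \<rho> \<mu>h x) = (if x \<in> S then K x else phi_inf \<phi>)"
    using RN_deriv_sum_meas_atoms[folded \<rho>_def]
  proof eventually_elim
    case (elim x)
    note rn = elim[symmetric]
    show ?case
    proof (cases "x \<in> S")
      case True
      have q: "measure \<mu> {x} / measure \<rho> {x} / (measure \<mu>h {x} / measure \<rho> {x}) = measure \<mu> {x} / measure \<mu>h {x}"
        using pos[OF True] by simp
      show ?thesis using rn True pos[OF True] S(2)[OF True]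
        by (simp add: div_integrand_def K_def q phi_conv_entropy[OF ef] enn2ereal_ennreal)
    qed (use rn in \<open>simp add: div_integrand_def one_ennreal.rep_eq\<close>)
  qed
  have "phi_div \<phi> \<mu> \<mu>h = ext_int \<rho> (\<lambda>x. if x \<in> S then K x else phi_inf \<phi>)"
    unfolding phi_div_def \<rho>_def[symmetric] Let_def using integrand by (rule ext_int_cong_AE)
  also have "\<dots> = (\<Sum>x\<in>S. ereal (measure \<rho> {x}) * K x) + ereal (measure \<rho> (space \<rho> - S)) * phi_inf \<phi>"
  proof (rule ext_int_piecewise[OF \<rho>(2) S(1)])
    show "S \<subseteq> space \<rho>" "\<And>x. x \<in> S \<Longrightarrow> {x} \<in> sets \<rho>"
      using \<rho>(1) sets_eq_imp_space_eq[OF \<rho>(1)] singleton_borel by auto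
    show "K x \<noteq> -\<infinity>" if "x \<in> S" for x
      using pos[OF that] S(2)[OF that] entropy_neq_minf[OF ef] unfolding K_def
      by (cases "\<phi> (measure \<mu> {x} / measure \<mu>h {x})") auto
  qed (rule phi_inf_neq_minf[OF ef])
  also have "(\<Sum>x\<in>S. ereal (measure \<rho> {x}) * K x) = (\<Sum>x\<in>S. ereal (measure \<mu>h {x}) * \<phi> (measure \<mu> {x} / measure \<mu>h {x}))"
  proof (intro sum.cong refl)
    fix x assume "x \<in> S"
    then have "measure \<rho> {x} * (measure \<mu>h {x} / measure \<rho> {x}) = measure \<mu>h {x}"
      using pos[of x] by simp
    then show "ereal (measure \<rho> {x}) * K x = ereal (measure \<mu>h {x}) * \<phi> (measure \<mu> {x} / measure \<mu>h {x})"
      unfolding K_def by (simp add: mult.assoc[symmetric])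
  qed
  also have "measure \<rho> (space \<rho> - S) = measure \<mu> (UNIV - S)"
    using \<rho>(4)[of "UNIV - S"] sets_eq_imp_space_eq[OF \<rho>(1)] finite_borel[OF S(1)] \<mu>h_outside
    by (simp add: measure_def)
  finally show ?thesis .
qed

end

section \<open>The transport problem with a moment constraint\<close>

definition mix_pmf :: "real \<Rightarrow> nat \<Rightarrow> 'b \<Rightarrow> (nat \<Rightarrow> 'b) \<Rightarrow> 'b pmf" where
  "mix_pmf \<epsilon> n p g =
     bind_pmf (bernoulli_pmf \<epsilon>) (\<lambda>b. if b then return_pmf p else map_pmf g (pmf_of_set {1..n}))"

lemma pmf_mix_pmf:
  assumes "0 \<le> \<epsilon>" "\<epsilon> \<le> 1" "n \<ge> 1"
  shows "pmf (mix_pmf \<epsilon> n p g) y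
    = \<epsilon> * (if y = p then 1 else 0) + (1 - \<epsilon>) * (real (card {i\<in>{1..n}. g i = y}) / real n)"
proof -
  have "pmf (mix_pmf \<epsilon> n p g) y = measure_pmf.expectation (bernoulli_pmf \<epsilon>)
      (\<lambda>b. pmf (if b then return_pmf p else map_pmf g (pmf_of_set {1..n})) y)"
    unfolding mix_pmf_def by (rule pmf_bind)
  also have "\<dots> = pmf (return_pmf p) y * \<epsilon> + pmf (map_pmf g (pmf_of_set {1..n})) y * (1 - \<epsilon>)"
    using assms by (subst integral_bernoulli_pmf) auto
  also have "pmf (map_pmf g (pmf_of_set {1..n})) y = real (card {i\<in>{1..n}. g i = y}) / real n"
    using assms by (simp add: pmf_map measure_pmf_of_set) (intro arg_cong[where f=card]; auto)
  finally show ?thesis by (simp add: pmf_return indicator_def mult.commute)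
qed

lemma map_mix_pmf: "map_pmf f (mix_pmf \<epsilon> n p g) = mix_pmf \<epsilon> n (f p) (f \<circ> g)"
  unfolding mix_pmf_def map_bind_pmf by (intro bind_pmf_cong refl) (auto simp: pmf.map_comp)

lemma set_mix_pmf_subset:
  assumes "0 \<le> \<epsilon>" "\<epsilon> \<le> 1" "n \<ge> 1"
  shows "set_pmf (mix_pmf \<epsilon> n p g) \<subseteq> insert p (g ` {1..n})"
proof
  fix y assume "y \<in> set_pmf (mix_pmf \<epsilon> n p g)"
  then have "pmf (mix_pmf \<epsilon> n p g) y \<noteq> 0" by (simp add: set_pmf_iff)
  then show "y \<in> insert p (g ` {1..n})"
    unfolding pmf_mix_pmf[OF assms] by (cases "y = p") (auto simp: card_eq_0_iff)
qed

lemma mix_pmf_cong: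
  "n \<ge> 1 \<Longrightarrow> (\<And>i. i \<in> {1..n} \<Longrightarrow> g i = g' i) \<Longrightarrow> mix_pmf \<epsilon> n p g = mix_pmf \<epsilon> n p g'"
  unfolding mix_pmf_def by (intro bind_pmf_cong refl) (auto intro!: pmf.map_cong)

lemma closed_fst_in_finite:
  assumes "finite F"
  shows "closed {y :: 'a::t1_space \<times> 'b::topological_space. fst y \<in> F}"
proof -
  have "{y :: 'a \<times> 'b. fst y \<in> F} = F \<times> UNIV" by auto
  then show ?thesis using assms by (simp add: closed_Times finite_imp_closed)
qed

locale ot_phi_setting =
  fixes Z :: "'a::euclidean_space set"
    and ell :: "'a \<Rightarrow> real"
    and \<phi> :: "real \<Rightarrow> ereal"
    and \<epsilon> :: real
    and n :: nat
    and zh :: "nat \<Rightarrow> 'a"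
  assumes Z_closed: "closed Z"
    and ef: "entropy_function \<phi>"
    and eps: "0 < \<epsilon>" "\<epsilon> < 1"
    and n: "n \<ge> 1"
    and zh_in_Z: "\<forall>i\<in>{1..n}. zh i \<in> Z"
    and top_in_Z: "zh (Suc n) \<in> Z" and top_max: "\<forall>z\<in>Z. ell z \<le> ell (zh (Suc n))"
    and top_new: "zh (Suc n) \<notin> zh ` {1..n}"
begin

abbreviation "S \<equiv> zh ` {1..n}"
abbreviation "a \<equiv> zh (Suc n)"
abbreviation "cinf \<equiv> phi_inf \<phi>"
abbreviation "muh \<equiv> empirical n zh"

definition emp_mass :: "'a \<Rightarrow> real" where
  "emp_mass x = real (card {i\<in>{1..n}. zh i = x}) / real n"

lemma eps1: "0 < 1 - \<epsilon>" using eps by simp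

lemma a_notin: "a \<notin> S" using top_new by simp

lemma zh_neq_a: "i \<in> {1..n} \<Longrightarrow> zh i \<noteq> a"
  using top_new by (metis image_eqI)

lemma sum_insert_a_if:
  "(\<Sum>x\<in>insert a S. g x (if x = a then u else v x)) = g a u + (\<Sum>x\<in>S. g x (v x))"
proof -
  have "(\<Sum>x\<in>S. g x (if x = a then u else v x)) = (\<Sum>x\<in>S. g x (v x))"
  proof (rule sum.cong[OF refl])
    fix x assume "x \<in> S"
    then have "x \<noteq> a" using a_notin by metis
    then show "g x (if x = a then u else v x) = g x (v x)" by simp
  qed
  then show ?thesis using a_notin by (simp add: sum.insert)
qed

lemma emp_mass_pos: "x \<in> S \<Longrightarrow> emp_mass x > 0"
  unfolding emp_mass_def using n by (auto intro!: divide_pos_pos simp: card_gt_0_iff)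

lemma emp_mass_nonneg: "emp_mass x \<ge> 0"
  unfolding emp_mass_def by simp

lemma sets_muh: "sets muh = sets borel"
  unfolding empirical_def by simp

lemma prob_space_muh: "prob_space muh"
  unfolding empirical_def by (rule prob_space.prob_space_distr[OF prob_space_measure_pmf]) auto

lemma emeasure_muh: "A \<in> sets borel \<Longrightarrow> emeasure muh A = ennreal (real (card ({1..n} \<inter> zh -` A)) / real n)"
  unfolding empirical_def using n by (simp add: emeasure_distr emeasure_pmf_of_set)

lemma measure_muh_singleton: "measure muh {x} = emp_mass x"
proof -
  have "{1..n} \<inter> zh -` {x} = {i\<in>{1..n}. zh i = x}" by auto
  then show ?thesis using emeasure_muh[of "{x}"] singleton_borel emp_mass_nonneg[of x]
    unfolding measure_def emp_mass_def by simp
qed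

lemma emeasure_muh_outside: "emeasure muh (UNIV - S) = 0"
  using emeasure_muh[of "UNIV - S"] finite_borel[of S] by auto

lemma phi_div_empirical:
  assumes "prob_space \<mu>" "sets \<mu> = sets borel"
  shows "phi_div \<phi> \<mu> muh
    = (\<Sum>x\<in>S. ereal (emp_mass x) * \<phi> (measure \<mu> {x} / emp_mass x)) + ereal (measure \<mu> (UNIV - S)) * cinf"
  using phi_div_finite_reference[OF ef assms prob_space_muh sets_muh _ _ emeasure_muh_outside]
  by (simp add: measure_muh_singleton emp_mass_pos)

lemma AE_in_Z:
  assumes "prob_space \<mu>" "sets \<mu> = sets borel" "emeasure \<mu> Z = 1"
  shows "AE x in \<mu>. x \<in> Z"
proof -
  interpret prob_space \<mu> by fact
  have "Z \<in> sets \<mu>" using assms(2) Z_closed by simp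
  then show ?thesis using AE_in_set_eq_1 assms(3) by (simp add: emeasure_eq_measure)
qed

abbreviation "mix \<equiv> mix_pmf \<epsilon> n"

lemma pmf_mix_inj:
  assumes inj: "inj_on H (insert a S)" and x: "x \<in> insert a S"
  shows "pmf (mix (H a) (H \<circ> zh)) (H x) = (if x = a then \<epsilon> else (1 - \<epsilon>) * emp_mass x)"
proof -
  have "{i\<in>{1..n}. (H \<circ> zh) i = H x} = {i\<in>{1..n}. zh i = x}"
    using inj_on_eq_iff[OF inj] x by auto
  moreover have "{i\<in>{1..n}. zh i = a} = {}" using zh_neq_a by blast
  ultimately show ?thesis
    using inj_on_eq_iff[OF inj x] eps n by (auto simp: pmf_mix_pmf emp_mass_def)
qed

lemma set_mix_inj: "set_pmf (mix (H a) (H \<circ> zh)) \<subseteq> H ` insert a S"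
  using set_mix_pmf_subset[of \<epsilon> n "H a" "H \<circ> zh"] eps n by auto

lemma ext_int_mix_inj:
  fixes H :: "'a \<Rightarrow> 'b::t1_space"
  assumes inj: "inj_on H (insert a S)" and f: "\<And>x. x \<in> insert a S \<Longrightarrow> f (H x) \<noteq> -\<infinity>"
  shows "ext_int (pmf_borel (mix (H a) (H \<circ> zh))) f
    = ereal \<epsilon> * f (H a) + (\<Sum>x\<in>S. ereal ((1 - \<epsilon>) * emp_mass x) * f (H x))"
proof -
  have "ext_int (pmf_borel (mix (H a) (H \<circ> zh))) f
      = (\<Sum>y\<in>H ` insert a S. ereal (pmf (mix (H a) (H \<circ> zh)) y) * f y)"
    by (rule ext_int_pmf_borel[OF _ set_mix_inj]) (use f in auto)
  also have "\<dots> = (\<Sum>x\<in>insert a S. ereal (if x = a then \<epsilon> else (1 - \<epsilon>) * emp_mass x) * f (H x))"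
    by (subst sum.reindex[OF inj]) (auto intro!: sum.cong simp: pmf_mix_inj[OF inj])
  also have "\<dots> = ereal \<epsilon> * f (H a) + (\<Sum>x\<in>S. ereal ((1 - \<epsilon>) * emp_mass x) * f (H x))"
    by (rule sum_insert_a_if)
  finally show ?thesis .
qed

lemma nn_integral_mix_inj:
  fixes H :: "'a \<Rightarrow> 'b::t1_space"
  assumes inj: "inj_on H (insert a S)" and h: "h \<in> borel_measurable borel"
  shows "(\<integral>\<^sup>+ y. h y \<partial>pmf_borel (mix (H a) (H \<circ> zh)))
    = ennreal \<epsilon> * h (H a) + (\<Sum>x\<in>S. ennreal ((1 - \<epsilon>) * emp_mass x) * h (H x))"
proof -
  have "(\<integral>\<^sup>+ y. h y \<partial>pmf_borel (mix (H a) (H \<circ> zh))) = (\<integral>\<^sup>+ y. h y \<partial>measure_pmf (mix (H a) (H \<circ> zh)))"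
    using h unfolding pmf_borel_def by (subst nn_integral_distr) auto
  also have "\<dots> = (\<Sum>y\<in>H ` insert a S. h y * ennreal (pmf (mix (H a) (H \<circ> zh)) y))"
    by (rule nn_integral_measure_pmf_support) (auto dest: subsetD[OF set_mix_inj[of H]])
  also have "\<dots> = (\<Sum>x\<in>insert a S. ennreal (if x = a then \<epsilon> else (1 - \<epsilon>) * emp_mass x) * h (H x))"
    by (subst sum.reindex[OF inj]) (auto intro!: sum.cong simp: pmf_mix_inj[OF inj] mult.commute)
  also have "\<dots> = ennreal \<epsilon> * h (H a) + (\<Sum>x\<in>S. ennreal ((1 - \<epsilon>) * emp_mass x) * h (H x))"
    by (rule sum_insert_a_if)
  finally show ?thesis .
qed

definition ref_point :: "'a \<Rightarrow> 'a \<times> real" where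
  "ref_point x = (x, if x \<in> S then 1 / (1 - \<epsilon>) else 0)"

lemma inj_ref_point: "inj_on ref_point (insert a S)"
  unfolding ref_point_def inj_on_def by auto

lemma nu_hat_eq_mix: "nu_hat n zh \<epsilon> = pmf_borel (mix (ref_point a) (ref_point \<circ> zh))"
  unfolding nu_hat_def pmf_borel_def mix_pmf_def[symmetric] ref_point_def
  using a_notin n by (auto intro!: arg_cong[where f="\<lambda>Q. distr (measure_pmf Q) borel (\<lambda>x. x)"] mix_pmf_cong)

definition diag_cost :: "'a \<times> real \<Rightarrow> ereal" where
  "diag_cost y = (if fst y \<in> S then \<phi> ((1 - \<epsilon>) * snd y) / ereal (1 - \<epsilon>)
    else if fst y = a then cinf * ereal (snd y) else \<infinity>)"

lemma cost_ot_eq_diag_cost: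
  "cost_ot \<phi> n zh \<epsilon> vw vwh = (if fst vw = fst vwh then diag_cost vw else \<infinity>)"
  unfolding cost_ot_def diag_cost_def Let_def phi_conv_entropy[OF ef] by auto

lemma diag_cost_le_cost_ot: "diag_cost vw \<le> cost_ot \<phi> n zh \<epsilon> vw vwh"
  unfolding cost_ot_eq_diag_cost by auto

lemma cost_ot_finite_imp:
  "cost_ot \<phi> n zh \<epsilon> vw vwh \<noteq> \<infinity> \<Longrightarrow> fst vw = fst vwh \<and> fst vw \<in> insert a S"
  unfolding cost_ot_eq_diag_cost diag_cost_def by (auto split: if_splits)

lemma entropy_measurable[measurable]: "\<phi> \<in> borel_measurable borel"
  by (rule entropy_borel_measurable[OF ef])

lemma diag_cost_measurable: "diag_cost \<in> borel_measurable (borel :: ('a \<times> real) measure)"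
proof -
  have sets: "{y \<in> space (borel :: ('a \<times> real) measure). fst y \<in> F} \<in> sets borel" if "finite F" for F
    using borel_closed[OF closed_fst_in_finite[OF that]] by simp
  have snd_m[measurable]: "(snd :: 'a \<times> real \<Rightarrow> real) \<in> borel_measurable borel"
    by (intro borel_measurable_continuous_onI continuous_intros)
  show ?thesis unfolding diag_cost_def
    using sets[of S] sets[of "{a}"] by (intro measurable_If measurable_const) auto
qed

lemma cost_ot_measurable:
  "(\<lambda>x. cost_ot \<phi> n zh \<epsilon> (fst x) (snd x)) \<in> borel_measurable (borel :: (('a \<times> real) \<times> ('a \<times> real)) measure)"
proof -
  have "closed {x :: ('a \<times> real) \<times> ('a \<times> real). fst (fst x) = fst (snd x)}"
    by (intro closed_Collect_eq continuous_intros)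
  moreover have "fst \<in> borel_measurable (borel :: (('a \<times> real) \<times> ('a \<times> real)) measure)"
    by (intro borel_measurable_continuous_onI continuous_intros)
  ultimately show ?thesis
    unfolding cost_ot_eq_diag_cost using measurable_compose[OF _ diag_cost_measurable]
    by (intro measurable_If measurable_const) auto
qed

lemma nu_hat_fiber:
  assumes x: "x \<in> insert a S"
  shows "measure (nu_hat n zh \<epsilon>) {y. fst y = x} = (if x = a then \<epsilon> else (1 - \<epsilon>) * emp_mass x)"
proof -
  define Q where "Q = mix (ref_point a) (ref_point \<circ> zh)"
  have fiber: "{y. fst y = x} \<inter> set_pmf Q = {ref_point x} \<inter> set_pmf Q"
    using set_mix_inj[of ref_point] unfolding Q_def by (auto simp: ref_point_def)
  have "emeasure (nu_hat n zh \<epsilon>) {y. fst y = x} = emeasure (measure_pmf Q) ({y. fst y = x} \<inter> set_pmf Q)"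
    unfolding nu_hat_eq_mix Q_def[symmetric] emeasure_Int_set_pmf
    using borel_closed[OF closed_fst_in_finite[of "{x}"]] by (intro emeasure_pmf_borel) simp
  also have "\<dots> = ennreal (pmf Q (ref_point x))"
    unfolding fiber by (simp add: emeasure_Int_set_pmf emeasure_pmf_single)
  also have "pmf Q (ref_point x) = (if x = a then \<epsilon> else (1 - \<epsilon>) * emp_mass x)"
    unfolding Q_def by (rule pmf_mix_inj[OF inj_ref_point x])
  finally show ?thesis using eps emp_mass_nonneg[of x] unfolding measure_def by simp
qed

lemma fst_snd_measurable:
  assumes "sets \<pi> = sets (borel :: (('a \<times> real) \<times> ('a \<times> real)) measure)"
  shows "fst \<in> measurable \<pi> (borel :: ('a \<times> real) measure)" and "snd \<in> measurable \<pi> (borel :: ('a \<times> real) measure)"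
  unfolding measurable_cong_sets[OF assms refl]
  by (intro borel_measurable_continuous_onI continuous_intros)+

lemma ext_int_diag_cost_le_coupling:
  assumes "\<pi> \<in> ot_couplings \<nu> \<nu>h"
  shows "ext_int \<nu> diag_cost \<le> ext_int \<pi> (\<lambda>x. cost_ot \<phi> n zh \<epsilon> (fst x) (snd x))"
proof -
  have p: "sets \<pi> = sets borel" "distr \<pi> borel fst = \<nu>" using assms unfolding ot_couplings_def by auto
  have "ext_int \<nu> diag_cost = ext_int \<pi> (\<lambda>x. diag_cost (fst x))"
    using ext_int_distr[OF fst_snd_measurable(1)[OF p(1)] diag_cost_measurable] p(2) by simp
  also have "\<dots> \<le> ext_int \<pi> (\<lambda>x. cost_ot \<phi> n zh \<epsilon> (fst x) (snd x))"
    by (intro ext_int_mono_AE AE_I2) (simp add: diag_cost_le_cost_ot)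
  finally show ?thesis .
qed

lemma finite_cost_coupling_diagonal:
  assumes "sets \<pi> = sets borel" and fin: "ext_int \<pi> (\<lambda>x. cost_ot \<phi> n zh \<epsilon> (fst x) (snd x)) < \<infinity>"
  shows "AE x in \<pi>. fst (fst x) = fst (snd x) \<and> fst (fst x) \<in> insert a S"
proof -
  have cm: "(\<lambda>x. e2ennreal (cost_ot \<phi> n zh \<epsilon> (fst x) (snd x))) \<in> borel_measurable \<pi>"
    using measurable_compose[OF cost_ot_measurable measurable_e2ennreal]
    by (simp add: measurable_cong_sets[OF assms(1) refl])
  have "(\<integral>\<^sup>+ x. e2ennreal (cost_ot \<phi> n zh \<epsilon> (fst x) (snd x)) \<partial>\<pi>) \<noteq> \<infinity>"
    using fin unfolding ext_int_def by auto
  from nn_integral_PInf_AE[OF cm this] have "AE x in \<pi>. cost_ot \<phi> n zh \<epsilon> (fst x) (snd x) \<noteq> \<infinity>"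
    by eventually_elim (auto simp: e2ennreal_infty)
  then show ?thesis
    by eventually_elim (rule cost_ot_finite_imp)
qed

lemma coupling_fiber_measure:
  fixes \<nu> :: "('a \<times> real) measure"
  assumes \<pi>: "\<pi> \<in> ot_couplings \<nu> (nu_hat n zh \<epsilon>)"
    and diag: "AE x in \<pi>. fst (fst x) = fst (snd x) \<and> fst (fst x) \<in> insert a S"
  shows "AE y in \<nu>. fst y \<in> insert a S"
    and "x \<in> insert a S \<Longrightarrow> measure \<nu> {y. fst y = x} = (if x = a then \<epsilon> else (1 - \<epsilon>) * emp_mass x)"
proof -
  have p: "prob_space \<pi>" "sets \<pi> = sets borel" "distr \<pi> borel fst = \<nu>" "distr \<pi> borel snd = nu_hat n zh \<epsilon>"
    using \<pi> unfolding ot_couplings_def by auto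
  interpret pi: prob_space \<pi> by (rule p(1))
  have space: "space \<pi> = UNIV" using sets_eq_imp_space_eq[OF p(2)] by simp
  note m = fst_snd_measurable[OF p(2)]
  show "AE y in \<nu>. fst y \<in> insert a S"
    unfolding p(3)[symmetric] using diag borel_closed[OF closed_fst_in_finite[of "insert a S"]]
    by (subst AE_distr_iff[OF m(1)]) (auto elim!: eventually_mono)
  assume x: "x \<in> insert a S"
  have B: "{y. fst y = x} \<in> sets (borel :: ('a \<times> real) measure)"
    using borel_closed[OF closed_fst_in_finite[of "{x}"]] by simp
  have B1: "{p \<in> space \<pi>. fst (fst p) = x} \<in> sets \<pi>" and B2: "{p \<in> space \<pi>. fst (snd p) = x} \<in> sets \<pi>"
  proof -
    have "closed {p :: ('a \<times> real) \<times> ('a \<times> real). fst (fst p) = x}"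
      "closed {p :: ('a \<times> real) \<times> ('a \<times> real). fst (snd p) = x}"
      by (intro closed_Collect_eq continuous_intros)+
    then show "{p \<in> space \<pi>. fst (fst p) = x} \<in> sets \<pi>" "{p \<in> space \<pi>. fst (snd p) = x} \<in> sets \<pi>"
      using p(2) space by simp_all
  qed
  have "measure \<nu> {y. fst y = x} = measure \<pi> {p \<in> space \<pi>. fst (fst p) = x}"
    unfolding p(3)[symmetric] by (subst measure_distr[OF m(1) B]) (auto intro!: arg_cong[where f="measure \<pi>"])
  also have "\<dots> = measure \<pi> {p \<in> space \<pi>. fst (snd p) = x}"
    using diag B1 B2 by (intro pi.finite_measure_eq_AE) (auto elim!: eventually_mono)
  also have "\<dots> = measure (nu_hat n zh \<epsilon>) {y. fst y = x}"
    unfolding p(4)[symmetric] by (subst measure_distr[OF m(2) B]) (auto intro!: arg_cong[where f="measure \<pi>"])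
  finally show "measure \<nu> {y. fst y = x} = (if x = a then \<epsilon> else (1 - \<epsilon>) * emp_mass x)"
    using nu_hat_fiber[OF x] by simp
qed

lemma coupling_moment:
  fixes \<nu> \<nu>h :: "('a \<times> real) measure"
  assumes "\<pi> \<in> ot_couplings \<nu> \<nu>h"
  shows "(\<integral>\<^sup>+ y. ennreal (snd y) \<partial>\<nu>) = 1"
proof -
  have p: "sets \<pi> = sets borel" "distr \<pi> borel fst = \<nu>" "(\<integral>\<^sup>+ x. ennreal (snd (fst x)) \<partial>\<pi>) = 1"
    using assms unfolding ot_couplings_def by auto
  have "(\<lambda>y::'a \<times> real. ennreal (snd y)) \<in> borel_measurable borel"
    by (intro measurable_compose[OF _ measurable_ennreal] borel_measurable_continuous_onI continuous_intros)
  then show ?thesis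
    using p unfolding p(2)[symmetric] by (subst nn_integral_distr[OF fst_snd_measurable(1)[OF p(1)]]) auto
qed

lemma diag_cost_affine_lower_bound:
  obtains K1 K2 where "K1 \<ge> 0" "K2 \<ge> 0"
    and "\<And>y. 0 \<le> snd y \<Longrightarrow> fst y \<in> insert a S \<Longrightarrow> - diag_cost y \<le> ereal (K1 + K2 * snd y)"
proof -
  obtain \<alpha> \<beta> where ab: "\<And>t. ereal (\<alpha> + \<beta> * t) \<le> \<phi> t" using entropy_affine_minorant[OF ef] by blast
  define K1 where "K1 = \<bar>\<alpha>\<bar> / (1 - \<epsilon>)"
  define c where "c = real_of_ereal cinf"
  define K2 where "K2 = \<bar>\<beta>\<bar> + \<bar>c\<bar>"
  have K: "K1 \<ge> 0" "K2 \<ge> 0" unfolding K1_def K2_def using eps1 by auto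
  have "- diag_cost y \<le> ereal (K1 + K2 * snd y)" if w: "0 \<le> snd y" and y: "fst y \<in> insert a S" for y
  proof (cases "fst y \<in> S")
    case True
    have "ereal ((\<alpha> + \<beta> * ((1 - \<epsilon>) * snd y)) / (1 - \<epsilon>)) \<le> diag_cost y"
      using ereal_divide_right_mono[OF ab, of "1 - \<epsilon>" "(1 - \<epsilon>) * snd y"] eps1 True
      by (simp add: diag_cost_def)
    then have "- diag_cost y \<le> ereal (- ((\<alpha> + \<beta> * ((1 - \<epsilon>) * snd y)) / (1 - \<epsilon>)))"
      by (metis ereal_minus_le_minus uminus_ereal.simps(1))
    also have "- ((\<alpha> + \<beta> * ((1 - \<epsilon>) * snd y)) / (1 - \<epsilon>)) = - \<alpha> / (1 - \<epsilon>) - \<beta> * snd y"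
      using eps1 by (simp add: field_simps)
    also have "\<dots> \<le> ereal (K1 + K2 * snd y)"
    proof -
      have "- \<alpha> / (1 - \<epsilon>) \<le> K1" unfolding K1_def using eps1 by (intro divide_right_mono) auto
      moreover have "- \<beta> * snd y \<le> K2 * snd y" unfolding K2_def using w by (intro mult_right_mono) auto
      ultimately show ?thesis by simp
    qed
    finally show ?thesis .
  next
    case False
    then have cy: "diag_cost y = cinf * ereal (snd y)" using y by (simp add: diag_cost_def)
    show ?thesis
    proof (cases cinf)
      case (real c0)
      have "- c0 * snd y \<le> K2 * snd y" unfolding K2_def c_def real using w by (intro mult_right_mono) auto
      then show ?thesis unfolding cy real using K by simp
    next
      case PInf
      then have "- diag_cost y \<le> 0" unfolding cy using w by (cases "snd y = 0") auto
      also have "0 \<le> ereal (K1 + K2 * snd y)" using K w by simp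
      finally show ?thesis .
    qed (use phi_inf_neq_minf[OF ef] in simp)
  qed
  then show ?thesis using K that by blast
qed

end

section \<open>Lifting a divergence-feasible distribution\<close>

locale phi_lift = ot_phi_setting +
  fixes \<mu> :: "'a measure"
  assumes mu_prob: "prob_space \<mu>" and mu_sets: "sets \<mu> = sets borel"
begin

interpretation mu: prob_space \<mu> by (rule mu_prob)

lemma space_mu: "space \<mu> = UNIV"
  using sets_eq_imp_space_eq[OF mu_sets] by simp

definition lift_weight :: "'a \<Rightarrow> real" where
  "lift_weight x = (if x \<in> S then measure \<mu> {x} / ((1 - \<epsilon>) * emp_mass x) else measure \<mu> (UNIV - S) / \<epsilon>)"

definition lift_point :: "'a \<Rightarrow> 'a \<times> real" where
  "lift_point x = (x, lift_weight x)"

definition lifted :: "('a \<times> real) measure" where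
  "lifted = pmf_borel (mix (lift_point a) (lift_point \<circ> zh))"

definition lift_coupling :: "(('a \<times> real) \<times> ('a \<times> real)) measure" where
  "lift_coupling = pmf_borel (mix (lift_point a, ref_point a) (\<lambda>i. (lift_point (zh i), ref_point (zh i))))"

abbreviation "lift_pair x \<equiv> (lift_point x, ref_point x)"

lemma inj_lift_point: "inj_on lift_point (insert a S)"
  unfolding lift_point_def inj_on_def by auto

lemma inj_lift_pair: "inj_on (\<lambda>x. lift_pair x) (insert a S)"
  unfolding lift_point_def inj_on_def by auto

lemma lift_coupling_eq: "lift_coupling = pmf_borel (mix (lift_pair a) ((\<lambda>x. lift_pair x) \<circ> zh))"
  unfolding lift_coupling_def comp_def ..

lemma lift_weight_nonneg: "lift_weight x \<ge> 0"
  unfolding lift_weight_def using eps emp_mass_pos by (auto intro!: divide_nonneg_pos)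

lemma mass_a_eq: "measure \<mu> (UNIV - S) = 1 - (\<Sum>x\<in>S. measure \<mu> {x})"
proof -
  have "(\<Sum>x\<in>S. measure \<mu> {x}) = measure \<mu> S"
    using mu_sets singleton_borel by (intro mu.finite_measure_eq_sum_singleton[symmetric]) auto
  then show ?thesis using mu.prob_compl[of S] space_mu mu_sets finite_borel[of S] by simp
qed

lemma lift_coupling_marginals:
  "distr lift_coupling borel fst = lifted" "distr lift_coupling borel snd = nu_hat n zh \<epsilon>"
proof -
  have "fst \<in> borel_measurable (borel :: (('a \<times> real) \<times> ('a \<times> real)) measure)"
    "snd \<in> borel_measurable (borel :: (('a \<times> real) \<times> ('a \<times> real)) measure)"
    by (intro borel_measurable_continuous_onI continuous_intros)+
  then show "distr lift_coupling borel fst = lifted" "distr lift_coupling borel snd = nu_hat n zh \<epsilon>"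
    unfolding lift_coupling_def lifted_def nu_hat_eq_mix
    by (simp_all add: distr_pmf_borel map_mix_pmf comp_def)
qed

lemma lift_coupling_moment: "(\<integral>\<^sup>+ x. ennreal (snd (fst x)) \<partial>lift_coupling) = 1"
proof -
  have m: "(\<lambda>x. ennreal (snd (fst x))) \<in> borel_measurable (borel :: (('a \<times> real) \<times> ('a \<times> real)) measure)"
    by (intro measurable_compose[OF _ measurable_ennreal] borel_measurable_continuous_onI continuous_intros)
  have "(\<integral>\<^sup>+ x. ennreal (snd (fst x)) \<partial>lift_coupling)
      = ennreal \<epsilon> * ennreal (lift_weight a) + (\<Sum>x\<in>S. ennreal ((1 - \<epsilon>) * emp_mass x) * ennreal (lift_weight x))"
    unfolding lift_coupling_eq by (subst nn_integral_mix_inj[OF inj_lift_pair m]) (simp add: lift_point_def)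
  also have "ennreal \<epsilon> * ennreal (lift_weight a) = ennreal (measure \<mu> (UNIV - S))"
    using eps a_notin lift_weight_nonneg[of a] by (simp add: ennreal_mult[symmetric] lift_weight_def)
  also have "(\<Sum>x\<in>S. ennreal ((1 - \<epsilon>) * emp_mass x) * ennreal (lift_weight x)) = (\<Sum>x\<in>S. ennreal (measure \<mu> {x}))"
  proof (rule sum.cong[OF refl])
    fix x assume x: "x \<in> S"
    show "ennreal ((1 - \<epsilon>) * emp_mass x) * ennreal (lift_weight x) = ennreal (measure \<mu> {x})"
      using eps1 emp_mass_pos[OF x] lift_weight_nonneg[of x] x
      by (simp add: ennreal_mult[symmetric] lift_weight_def)
  qed
  also have "ennreal (measure \<mu> (UNIV - S)) + (\<Sum>x\<in>S. ennreal (measure \<mu> {x})) = ennreal (measure \<mu> (UNIV - S) + (\<Sum>x\<in>S. measure \<mu> {x}))"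
    by (simp add: sum_ennreal ennreal_plus sum_nonneg)
  finally show ?thesis using mass_a_eq by simp
qed

lemma lift_coupling_in_couplings: "lift_coupling \<in> ot_couplings lifted (nu_hat n zh \<epsilon>)"
  unfolding ot_couplings_def
  using lift_coupling_marginals lift_coupling_moment prob_space_pmf_borel by (auto simp: lift_coupling_def)

lemma cost_ot_lift_pair:
  assumes "x \<in> insert a S"
  shows "cost_ot \<phi> n zh \<epsilon> (lift_point x) (ref_point x)
    = (if x \<in> S then \<phi> (measure \<mu> {x} / emp_mass x) / ereal (1 - \<epsilon>) else cinf * ereal (measure \<mu> (UNIV - S) / \<epsilon>))"
proof (cases "x \<in> S")
  case True
  then have "(1 - \<epsilon>) * lift_weight x = measure \<mu> {x} / emp_mass x" using eps1 unfolding lift_weight_def by simp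
  then show ?thesis
    using True unfolding cost_ot_def lift_point_def ref_point_def Let_def by (simp add: phi_conv_entropy[OF ef])
next
  case False
  then show ?thesis using assms unfolding cost_ot_def lift_point_def ref_point_def lift_weight_def Let_def by simp
qed

lemma ext_int_cost_lift_coupling:
  "ext_int lift_coupling (\<lambda>x. cost_ot \<phi> n zh \<epsilon> (fst x) (snd x)) = phi_div \<phi> \<mu> muh"
proof -
  have neq: "cost_ot \<phi> n zh \<epsilon> (lift_point x) (ref_point x) \<noteq> -\<infinity>" if x: "x \<in> insert a S" for x
  proof (cases "x \<in> S")
    case True
    then show ?thesis unfolding cost_ot_lift_pair[OF x] using entropy_neq_minf[OF ef] eps1
      by (cases "\<phi> (measure \<mu> {x} / emp_mass x)") auto
  next
    case False
    have "measure \<mu> (UNIV - S) / \<epsilon> \<ge> 0" using eps by simp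
    then show ?thesis unfolding cost_ot_lift_pair[OF x] using False phi_inf_neq_minf[OF ef]
      by (cases cinf) (auto simp: not_le)
  qed
  have a: "ereal \<epsilon> * (cinf * ereal (measure \<mu> (UNIV - S) / \<epsilon>)) = ereal (measure \<mu> (UNIV - S)) * cinf"
  proof -
    have "ereal \<epsilon> * (cinf * ereal (measure \<mu> (UNIV - S) / \<epsilon>))
        = (ereal \<epsilon> * ereal (measure \<mu> (UNIV - S) / \<epsilon>)) * cinf"
      by (metis mult.assoc mult.commute)
    then show ?thesis using eps by simp
  qed
  have S: "ereal ((1 - \<epsilon>) * emp_mass x) * (\<phi> (measure \<mu> {x} / emp_mass x) / ereal (1 - \<epsilon>))
      = ereal (emp_mass x) * \<phi> (measure \<mu> {x} / emp_mass x)" for x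
    using eps1 by (cases "\<phi> (measure \<mu> {x} / emp_mass x)") (auto simp: field_simps zero_less_mult_iff)
  have "ext_int lift_coupling (\<lambda>x. cost_ot \<phi> n zh \<epsilon> (fst x) (snd x))
      = ereal \<epsilon> * cost_ot \<phi> n zh \<epsilon> (lift_point a) (ref_point a)
        + (\<Sum>x\<in>S. ereal ((1 - \<epsilon>) * emp_mass x) * cost_ot \<phi> n zh \<epsilon> (lift_point x) (ref_point x))"
    unfolding lift_coupling_eq by (subst ext_int_mix_inj[OF inj_lift_pair]) (use neq in auto)
  also have "ereal \<epsilon> * cost_ot \<phi> n zh \<epsilon> (lift_point a) (ref_point a) = ereal (measure \<mu> (UNIV - S)) * cinf"
    using cost_ot_lift_pair[of a] a_notin a by simp
  also have "(\<Sum>x\<in>S. ereal ((1 - \<epsilon>) * emp_mass x) * cost_ot \<phi> n zh \<epsilon> (lift_point x) (ref_point x))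
      = (\<Sum>x\<in>S. ereal (emp_mass x) * \<phi> (measure \<mu> {x} / emp_mass x))"
    by (rule sum.cong[OF refl]) (simp add: cost_ot_lift_pair S)
  finally show ?thesis unfolding phi_div_empirical[OF mu_prob mu_sets] by (simp add: add.commute)
qed

lemma lifted_support: "emeasure lifted (Z \<times> {0..}) = 1"
proof -
  have "AE x in measure_pmf (mix (lift_point a) (lift_point \<circ> zh)). x \<in> Z \<times> {0..}"
    using AE_measure_pmf
  proof (rule eventually_mono)
    fix x assume "x \<in> set_pmf (mix (lift_point a) (lift_point \<circ> zh))"
    then have "x \<in> lift_point ` insert a S" by (rule subsetD[OF set_mix_inj])
    then obtain z where "z \<in> insert a S" "x = lift_point z" by blast
    then show "x \<in> Z \<times> {0..}" using lift_weight_nonneg zh_in_Z top_in_Z by (auto simp: lift_point_def)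
  qed
  then have "emeasure (measure_pmf (mix (lift_point a) (lift_point \<circ> zh))) (Z \<times> {0..}) = 1"
    by (intro measure_pmf.emeasure_eq_1_AE) auto
  moreover have "Z \<times> {0..} \<in> sets (borel :: ('a \<times> real) measure)"
    using Z_closed by (intro borel_closed closed_Times) auto
  ultimately show ?thesis unfolding lifted_def by (simp add: emeasure_pmf_borel)
qed

lemma ext_int_lifted_value:
  "ext_int lifted (\<lambda>(v, w). ereal (ell v * w))
    = ereal (ell a * measure \<mu> (UNIV - S) + (\<Sum>x\<in>S. ell x * measure \<mu> {x}))"
proof -
  have "ext_int lifted (\<lambda>(v, w). ereal (ell v * w))
      = ereal \<epsilon> * ereal (ell a * lift_weight a) + (\<Sum>x\<in>S. ereal ((1 - \<epsilon>) * emp_mass x) * ereal (ell x * lift_weight x))"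
    unfolding lifted_def by (subst ext_int_mix_inj[OF inj_lift_point]) (auto simp: lift_point_def)
  also have "\<dots> = ereal (\<epsilon> * (ell a * lift_weight a) + (\<Sum>x\<in>S. (1 - \<epsilon>) * emp_mass x * (ell x * lift_weight x)))"
    by (simp add: sum_ereal)
  also have "\<epsilon> * (ell a * lift_weight a) = ell a * measure \<mu> (UNIV - S)"
    using a_notin eps unfolding lift_weight_def by simp
  also have "(\<Sum>x\<in>S. (1 - \<epsilon>) * emp_mass x * (ell x * lift_weight x)) = (\<Sum>x\<in>S. ell x * measure \<mu> {x})"
  proof (rule sum.cong[OF refl])
    fix x assume x: "x \<in> S"
    show "(1 - \<epsilon>) * emp_mass x * (ell x * lift_weight x) = ell x * measure \<mu> {x}"
      using x eps1 emp_mass_pos[OF x] unfolding lift_weight_def by (simp add: field_simps)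
  qed
  finally show ?thesis .
qed

lemma ext_int_value_le_lifted:
  assumes "emeasure \<mu> Z = 1"
  shows "ext_int \<mu> (\<lambda>z. ereal (ell z)) \<le> ext_int lifted (\<lambda>(v, w). ereal (ell v * w))"
proof -
  have "ext_int \<mu> (\<lambda>z. ereal (ell z)) \<le> ext_int \<mu> (\<lambda>z. if z \<in> S then ereal (ell z) else ereal (ell a))"
    using AE_in_Z[OF mu_prob mu_sets assms]
    by (intro ext_int_mono_AE) (auto elim!: eventually_mono simp: top_max)
  also have "\<dots> = (\<Sum>x\<in>S. ereal (measure \<mu> {x}) * ereal (ell x)) + ereal (measure \<mu> (space \<mu> - S)) * ereal (ell a)"
    by (rule ext_int_piecewise) (use mu.finite_measure_axioms space_mu mu_sets singleton_borel in auto)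
  also have "\<dots> = ext_int lifted (\<lambda>(v, w). ereal (ell v * w))"
    unfolding ext_int_lifted_value by (simp add: sum_ereal space_mu mult.commute)
  finally show ?thesis .
qed

end

section \<open>Projecting a transport-feasible distribution\<close>

locale ot_feasible = ot_phi_setting +
  fixes \<nu> :: "('a \<times> real) measure" and r :: real
  assumes nu_prob: "prob_space \<nu>" and nu_sets: "sets \<nu> = sets borel"
    and nu_support: "emeasure \<nu> (Z \<times> {0..}) = 1"
    and nu_OT: "OT_disc (cost_ot \<phi> n zh \<epsilon>) \<nu> (nu_hat n zh \<epsilon>) \<le> ereal r"
begin

interpretation nu: prob_space \<nu> by (rule nu_prob)

lemma space_nu: "space \<nu> = UNIV" using sets_eq_imp_space_eq[OF nu_sets] by simp

lemma finite_cost_coupling: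
  obtains \<pi> where "\<pi> \<in> ot_couplings \<nu> (nu_hat n zh \<epsilon>)"
    and "AE x in \<pi>. fst (fst x) = fst (snd x) \<and> fst (fst x) \<in> insert a S"
proof -
  have "(INF \<pi>\<in>ot_couplings \<nu> (nu_hat n zh \<epsilon>). ext_int \<pi> (\<lambda>x. cost_ot \<phi> n zh \<epsilon> (fst x) (snd x))) < \<infinity>"
    using nu_OT unfolding OT_disc_eq_INF_couplings by (rule le_less_trans) simp
  then obtain \<pi> where "\<pi> \<in> ot_couplings \<nu> (nu_hat n zh \<epsilon>)"
      "ext_int \<pi> (\<lambda>x. cost_ot \<phi> n zh \<epsilon> (fst x) (snd x)) < \<infinity>"
    unfolding INF_less_iff by blast
  moreover have "sets \<pi> = sets borel" using \<open>\<pi> \<in> _\<close> unfolding ot_couplings_def by simp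
  ultimately show ?thesis using finite_cost_coupling_diagonal that by blast
qed

lemma AE_fst_in_support: "AE y in \<nu>. fst y \<in> insert a S"
proof -
  obtain \<pi> where "\<pi> \<in> ot_couplings \<nu> (nu_hat n zh \<epsilon>)"
    "AE x in \<pi>. fst (fst x) = fst (snd x) \<and> fst (fst x) \<in> insert a S"
    by (rule finite_cost_coupling)
  then show ?thesis by (rule coupling_fiber_measure(1))
qed

definition fiber :: "'a \<Rightarrow> ('a \<times> real) set" where
  "fiber x = {y. fst y = x}"

lemma measure_fiber:
  "x \<in> insert a S \<Longrightarrow> measure \<nu> (fiber x) = (if x = a then \<epsilon> else (1 - \<epsilon>) * emp_mass x)"
proof -
  obtain \<pi> where "\<pi> \<in> ot_couplings \<nu> (nu_hat n zh \<epsilon>)"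
    "AE x in \<pi>. fst (fst x) = fst (snd x) \<and> fst (fst x) \<in> insert a S"
    by (rule finite_cost_coupling)
  then show "x \<in> insert a S \<Longrightarrow> ?thesis" unfolding fiber_def by (rule coupling_fiber_measure(2))
qed

lemma nn_integral_weight: "(\<integral>\<^sup>+ y. ennreal (snd y) \<partial>\<nu>) = 1"
proof -
  obtain \<pi> where "\<pi> \<in> ot_couplings \<nu> (nu_hat n zh \<epsilon>)" by (rule finite_cost_coupling)
  then show ?thesis by (rule coupling_moment)
qed

lemma ext_int_diag_cost_le: "ext_int \<nu> diag_cost \<le> ereal r"
proof -
  have "ext_int \<nu> diag_cost
      \<le> (INF \<pi>\<in>ot_couplings \<nu> (nu_hat n zh \<epsilon>). ext_int \<pi> (\<lambda>x. cost_ot \<phi> n zh \<epsilon> (fst x) (snd x)))"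
    by (rule INF_greatest) (rule ext_int_diag_cost_le_coupling)
  then show ?thesis using nu_OT unfolding OT_disc_eq_INF_couplings by (rule order_trans)
qed

lemma AE_in_support: "AE y in \<nu>. y \<in> Z \<times> {0..}"
proof -
  have "Z \<times> {0..} \<in> sets \<nu>" using Z_closed nu_sets by (simp add: borel_closed closed_Times)
  then show ?thesis using nu.AE_in_set_eq_1 nu_support by (simp add: nu.emeasure_eq_measure)
qed

lemma AE_weight_nonneg: "AE y in \<nu>. 0 \<le> snd y"
  using AE_in_support by eventually_elim auto

lemma snd_measurable[measurable]: "snd \<in> borel_measurable \<nu>"
  by (simp add: measurable_cong_sets[OF nu_sets refl]) (intro borel_measurable_continuous_onI continuous_intros)

lemma fst_measurable: "fst \<in> measurable \<nu> borel"
  by (simp add: measurable_cong_sets[OF nu_sets refl]) (intro borel_measurable_continuous_onI continuous_intros)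

lemma integrable_weight: "integrable \<nu> snd"
  by (rule integrableI_nonneg[OF snd_measurable AE_weight_nonneg]) (simp add: nn_integral_weight)

lemma integral_weight: "(\<integral> y. snd y \<partial>\<nu>) = 1"
  using nn_integral_eq_integral[OF integrable_weight AE_weight_nonneg] nn_integral_weight
    integral_nonneg_AE[OF AE_weight_nonneg] by simp

lemma sets_fiber: "fiber x \<in> sets \<nu>"
  using borel_closed[OF closed_fst_in_finite[of "{x}"]] nu_sets unfolding fiber_def by simp

lemma integrable_weight_fiber: "integrable \<nu> (\<lambda>y. snd y * indicator (fiber x) y)"
  by (rule integrable_real_mult_indicator[OF sets_fiber integrable_weight])

definition fiber_weight :: "'a \<Rightarrow> real" where
  "fiber_weight x = (\<integral> y. snd y * indicator (fiber x) y \<partial>\<nu>)"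

lemma fiber_weight_nonneg: "fiber_weight x \<ge> 0"
  unfolding fiber_weight_def using AE_weight_nonneg
  by (intro integral_nonneg_AE) (auto elim!: eventually_mono simp: indicator_def)

lemma fiber_neg_cost_finite:
  assumes x: "x \<in> insert a S"
  shows "(\<integral>\<^sup>+ y. e2ennreal (- diag_cost y) * indicator (fiber x) y \<partial>\<nu>) \<noteq> \<top>"
proof -
  obtain K1 K2 where K: "K1 \<ge> 0" "K2 \<ge> 0"
    and bound: "\<And>y. 0 \<le> snd y \<Longrightarrow> fst y \<in> insert a S \<Longrightarrow> - diag_cost y \<le> ereal (K1 + K2 * snd y)"
    using diag_cost_affine_lower_bound by blast
  have "(\<integral>\<^sup>+ y. e2ennreal (- diag_cost y) * indicator (fiber x) y \<partial>\<nu>) \<le> (\<integral>\<^sup>+ y. ennreal (K1 + K2 * snd y) \<partial>\<nu>)"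
    using AE_weight_nonneg
  proof (intro nn_integral_mono_AE, eventually_elim)
    case (elim y)
    show ?case
    proof (cases "y \<in> fiber x")
      case True
      then have "e2ennreal (- diag_cost y) \<le> e2ennreal (ereal (K1 + K2 * snd y))"
        using x elim by (intro e2ennreal_mono bound) (auto simp: fiber_def)
      then show ?thesis using True by (simp add: e2ennreal_ereal)
    qed simp
  qed
  also have "\<dots> < \<top>"
    using integrableD(2)[of \<nu> "\<lambda>y. K1 + K2 * snd y"] integrable_weight by (simp add: top.not_eq_extremum)
  finally show ?thesis by simp
qed

lemma measure_fiber_S: assumes x: "x \<in> S" shows "measure \<nu> (fiber x) = (1 - \<epsilon>) * emp_mass x"
proof -
  have "x \<noteq> a" using a_notin x by metis
  then show ?thesis using measure_fiber[of x] x unfolding fiber_def by simp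
qed

lemma ext_int_jensen_fiber:
  assumes x: "x \<in> S"
  shows "ereal ((1 - \<epsilon>) * emp_mass x) * \<phi> (fiber_weight x / emp_mass x)
      \<le> ext_int \<nu> (\<lambda>y. if y \<in> fiber x then \<phi> ((1 - \<epsilon>) * snd y) else 0)"
proof -
  have k: "measure \<nu> (fiber x) > 0" using measure_fiber_S[OF x] eps1 emp_mass_pos[OF x] by simp
  have Xm: "(\<lambda>y. (1 - \<epsilon>) * snd y) \<in> borel_measurable \<nu>" by measurable
  have Xi: "integrable \<nu> (\<lambda>y. (1 - \<epsilon>) * snd y * indicator (fiber x) y)"
    using integrable_weight_fiber[of x] by (simp add: mult.assoc)
  have intX: "(\<integral> y. (1 - \<epsilon>) * snd y * indicator (fiber x) y \<partial>\<nu>) = (1 - \<epsilon>) * fiber_weight x"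
    unfolding fiber_weight_def by (simp add: mult.assoc)
  have q: "(1 - \<epsilon>) * fiber_weight x / ((1 - \<epsilon>) * emp_mass x) = fiber_weight x / emp_mass x"
    using eps1 by simp
  show ?thesis
    using ext_int_jensen[OF ef nu.finite_measure_axioms sets_fiber k Xm Xi] unfolding intX measure_fiber_S[OF x] q .
qed

lemma emp_term_le_fiber_cost:
  assumes x: "x \<in> S"
  shows "ereal (emp_mass x) * \<phi> (fiber_weight x / emp_mass x) \<le> ext_int \<nu> (\<lambda>y. if y \<in> fiber x then diag_cost y else 0)"
proof -
  define c where "c = 1 / (1 - \<epsilon>)"
  have c: "0 < c" unfolding c_def using eps1 by simp
  have fm: "(\<lambda>y. if y \<in> fiber x then \<phi> ((1 - \<epsilon>) * snd y) else 0) \<in> borel_measurable \<nu>"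
    using sets_fiber by measurable
  have "ereal (emp_mass x) * \<phi> (fiber_weight x / emp_mass x) = ereal ((1 - \<epsilon>) * emp_mass x) * \<phi> (fiber_weight x / emp_mass x) * ereal c"
  proof -
    have "ereal ((1 - \<epsilon>) * emp_mass x) * ereal c = ereal (emp_mass x)" unfolding c_def using eps1 by simp
    then show ?thesis by (metis mult.assoc mult.commute)
  qed
  also have "\<dots> \<le> ext_int \<nu> (\<lambda>y. if y \<in> fiber x then \<phi> ((1 - \<epsilon>) * snd y) else 0) * ereal c"
    using ext_int_jensen_fiber[OF x] c by (intro ereal_mult_right_mono) auto
  also have "\<dots> = ext_int \<nu> (\<lambda>y. (if y \<in> fiber x then \<phi> ((1 - \<epsilon>) * snd y) else 0) * ereal c)"
    by (rule ext_int_cmult[OF c fm, symmetric])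
  also have "\<dots> = ext_int \<nu> (\<lambda>y. if y \<in> fiber x then diag_cost y else 0)"
  proof (intro ext_int_cong_AE AE_I2)
    fix y
    show "(if y \<in> fiber x then \<phi> ((1 - \<epsilon>) * snd y) else 0) * ereal c = (if y \<in> fiber x then diag_cost y else 0)"
      using x eps1 unfolding diag_cost_def fiber_def c_def by (auto simp: divide_ereal_def inverse_eq_divide)
  qed
  finally show ?thesis .
qed

lemma emeasure_positive_weight_fiber:
  assumes "fiber_weight x > 0"
  shows "emeasure \<nu> {y \<in> fiber x. 0 < snd y} > 0"
proof (rule ccontr)
  have B: "{y \<in> fiber x. 0 < snd y} \<in> sets \<nu>" using sets_fiber[of x] by measurable
  assume "\<not> emeasure \<nu> {y \<in> fiber x. 0 < snd y} > 0"
  then have "AE y in \<nu>. y \<notin> {y \<in> fiber x. 0 < snd y}"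
    using B by (intro AE_not_in) (simp add: null_sets_def not_gr_zero)
  then have "AE y in \<nu>. snd y * indicator (fiber x) y = 0"
    using AE_weight_nonneg by eventually_elim (auto simp: indicator_def)
  then have "fiber_weight x = 0" unfolding fiber_weight_def by (simp add: integral_eq_zero_AE)
  with assms show False by simp
qed

lemma inf_term_le_fiber_cost: "ereal (fiber_weight a) * cinf \<le> ext_int \<nu> (\<lambda>y. if y \<in> fiber a then diag_cost y else 0)"
proof -
  have cost_a: "diag_cost y = cinf * ereal (snd y)" if "y \<in> fiber a" for y
    using that a_notin unfolding diag_cost_def fiber_def by auto
  show ?thesis
  proof (cases cinf)
    case (real c0)
    have "ext_int \<nu> (\<lambda>y. if y \<in> fiber a then diag_cost y else 0) = ext_int \<nu> (\<lambda>y. ereal (c0 * (snd y * indicator (fiber a) y)))"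
      by (intro ext_int_cong_AE AE_I2) (auto simp: cost_a real indicator_def)
    also have "\<dots> = ereal (c0 * fiber_weight a)"
      using integrable_weight_fiber[of a] unfolding fiber_weight_def by (subst ext_int_ereal) auto
    finally show ?thesis using real by (simp add: mult.commute)
  next
    case PInf
    show ?thesis
    proof (cases "fiber_weight a = 0")
      case True
      have "0 \<le> ext_int \<nu> (\<lambda>y. if y \<in> fiber a then diag_cost y else 0)"
      proof -
        have "ext_int \<nu> (\<lambda>_. 0) \<le> ext_int \<nu> (\<lambda>y. if y \<in> fiber a then diag_cost y else 0)"
          using AE_weight_nonneg by (intro ext_int_mono_AE) (auto elim!: eventually_mono simp: cost_a PInf)
        then show ?thesis by (simp add: ext_int_zero)
      qed
      then show ?thesis using True PInf by simp
    next
      case False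
      then have "emeasure \<nu> {y \<in> fiber a. 0 < snd y} > 0"
        using fiber_weight_nonneg[of a] by (intro emeasure_positive_weight_fiber) simp
      then have "ext_int \<nu> (\<lambda>y. if y \<in> fiber a then diag_cost y else 0) = \<infinity>"
        using sets_fiber[of a] by (intro ext_int_eq_infinity) (auto simp: cost_a PInf)
      then show ?thesis by simp
    qed
  next
    case MInf then show ?thesis using phi_inf_neq_minf[OF ef] by simp
  qed
qed

definition reweighted :: "'a measure" where
  "reweighted = distr (density \<nu> (\<lambda>y. ennreal (snd y))) borel fst"

lemma sets_reweighted: "sets reweighted = sets borel" and space_reweighted: "space reweighted = UNIV"
  unfolding reweighted_def by auto

lemma emeasure_reweighted:
  assumes B: "B \<in> sets borel"
  shows "emeasure reweighted B = ennreal (\<integral> y. snd y * indicator (fst -` B) y \<partial>\<nu>)"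
proof -
  have fB: "fst -` B \<in> sets \<nu>" using measurable_sets[OF fst_measurable B] space_nu by simp
  have fm: "fst \<in> measurable (density \<nu> (\<lambda>y. ennreal (snd y))) borel"
    using fst_measurable by (simp add: measurable_cong_sets[OF sets_density refl])
  have "emeasure reweighted B = emeasure (density \<nu> (\<lambda>y. ennreal (snd y))) (fst -` B \<inter> space (density \<nu> (\<lambda>y. ennreal (snd y))))"
    unfolding reweighted_def by (rule emeasure_distr[OF fm B])
  also have "\<dots> = emeasure (density \<nu> (\<lambda>y. ennreal (snd y))) (fst -` B)" by (simp add: space_nu)
  also have "\<dots> = (\<integral>\<^sup>+ y. ennreal (snd y) * indicator (fst -` B) y \<partial>\<nu>)"
    by (rule emeasure_density) (use fB in auto)
  also have "\<dots> = (\<integral>\<^sup>+ y. ennreal (snd y * indicator (fst -` B) y) \<partial>\<nu>)"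
    by (intro nn_integral_cong) (auto simp: indicator_def)
  also have "\<dots> = ennreal (\<integral> y. snd y * indicator (fst -` B) y \<partial>\<nu>)"
    using AE_weight_nonneg by (intro nn_integral_eq_integral integrable_real_mult_indicator[OF fB integrable_weight])
      (auto elim!: eventually_mono simp: indicator_def)
  finally show ?thesis .
qed

lemma weight_integral_cong_AE:
  assumes B: "B \<in> sets borel" and ae: "AE y in \<nu>. (fst y \<in> B) = (fst y \<in> C)" and C: "C \<in> sets borel"
  shows "(\<integral> y. snd y * indicator (fst -` B) y \<partial>\<nu>) = (\<integral> y. snd y * indicator (fst -` C) y \<partial>\<nu>)"
proof -
  have fB: "fst -` B \<in> sets \<nu>" using measurable_sets[OF fst_measurable B] space_nu by simp
  have fC: "fst -` C \<in> sets \<nu>" using measurable_sets[OF fst_measurable C] space_nu by simp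
  have m1: "(\<lambda>y. snd y * indicator (fst -` B) y) \<in> borel_measurable \<nu>"
    using integrable_real_mult_indicator[OF fB integrable_weight] by (rule borel_measurable_integrable)
  have m2: "(\<lambda>y. snd y * indicator (fst -` C) y) \<in> borel_measurable \<nu>"
    using integrable_real_mult_indicator[OF fC integrable_weight] by (rule borel_measurable_integrable)
  show ?thesis
    using ae by (intro integral_cong_AE[OF m1 m2]) (auto elim!: eventually_mono simp: indicator_def)
qed

lemma emeasure_reweighted_UNIV: "emeasure reweighted UNIV = 1"
  using emeasure_reweighted[of UNIV] integral_weight by simp

lemma prob_space_reweighted: "prob_space reweighted"
  by (rule prob_spaceI) (simp add: space_reweighted emeasure_reweighted_UNIV)

lemma finite_measure_reweighted: "finite_measure reweighted"
  using prob_space_reweighted unfolding prob_space_def by blast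

lemma emeasure_reweighted_Z: "emeasure reweighted Z = 1"
proof -
  have Zs: "Z \<in> sets borel" using Z_closed by simp
  have "(\<integral> y. snd y * indicator (fst -` Z) y \<partial>\<nu>) = (\<integral> y. snd y * indicator (fst -` UNIV) y \<partial>\<nu>)"
    by (rule weight_integral_cong_AE[OF Zs]) (use AE_in_support in \<open>auto elim!: eventually_mono\<close>)
  then show ?thesis using emeasure_reweighted[OF Zs] emeasure_reweighted_UNIV emeasure_reweighted[of UNIV] by simp
qed

lemma reweighted_singleton: "measure reweighted {x} = fiber_weight x"
proof -
  have "fst -` {x} = fiber x" unfolding fiber_def by auto
  then show ?thesis using emeasure_reweighted[of "{x}"] singleton_borel fiber_weight_nonneg[of x] unfolding measure_def fiber_weight_def
    by simp
qed

lemma reweighted_outside: "measure reweighted (UNIV - S) = fiber_weight a"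
proof -
  have Ss: "UNIV - S \<in> sets borel" using finite_borel[of S] by auto
  have "(\<integral> y. snd y * indicator (fst -` (UNIV - S)) y \<partial>\<nu>) = (\<integral> y. snd y * indicator (fst -` {a}) y \<partial>\<nu>)"
    by (rule weight_integral_cong_AE[OF Ss _ singleton_borel]) (use AE_fst_in_support a_notin in \<open>auto elim!: eventually_mono\<close>)
  also have "fst -` {a} = fiber a" unfolding fiber_def by auto
  finally show ?thesis using emeasure_reweighted[OF Ss] fiber_weight_nonneg[of a] unfolding measure_def fiber_weight_def by simp
qed

lemma reweighted_null: "emeasure reweighted (UNIV - insert a S) = 0"
proof -
  have Ss: "UNIV - insert a S \<in> sets borel" using finite_borel[of "insert a S"] by auto
  have "(\<integral> y. snd y * indicator (fst -` (UNIV - insert a S)) y \<partial>\<nu>) = (\<integral> y. snd y * indicator (fst -` {}) y \<partial>\<nu>)"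
    by (rule weight_integral_cong_AE[OF Ss]) (use AE_fst_in_support in \<open>auto elim!: eventually_mono\<close>)
  then show ?thesis using emeasure_reweighted[OF Ss] by simp
qed

lemma phi_div_reweighted_le: "phi_div \<phi> reweighted muh \<le> ereal r"
proof -
  have diag_cost_meas: "diag_cost \<in> borel_measurable \<nu>" using diag_cost_measurable by (simp add: measurable_cong_sets[OF nu_sets refl])
  have dis: "disjoint_family_on fiber (insert a S)" unfolding disjoint_family_on_def fiber_def by auto
  have cov: "AE y in \<nu>. y \<in> (\<Union>x\<in>insert a S. fiber x)"
    using AE_fst_in_support by (rule eventually_mono) (auto simp: fiber_def)
  have "ext_int \<nu> diag_cost = (\<Sum>x\<in>insert a S. ext_int \<nu> (\<lambda>y. if y \<in> fiber x then diag_cost y else 0))"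
    by (rule ext_int_split[OF _ dis sets_fiber diag_cost_meas cov fiber_neg_cost_finite]) auto
  also have "\<dots> = ext_int \<nu> (\<lambda>y. if y \<in> fiber a then diag_cost y else 0) + (\<Sum>x\<in>S. ext_int \<nu> (\<lambda>y. if y \<in> fiber x then diag_cost y else 0))"
    using a_notin by (simp add: sum.insert)
  finally have split: "ext_int \<nu> diag_cost = \<dots>" .
  have "phi_div \<phi> reweighted muh = (\<Sum>x\<in>S. ereal (emp_mass x) * \<phi> (measure reweighted {x} / emp_mass x)) + ereal (measure reweighted (UNIV - S)) * cinf"
    by (rule phi_div_empirical[OF prob_space_reweighted sets_reweighted])
  also have "\<dots> = (\<Sum>x\<in>S. ereal (emp_mass x) * \<phi> (fiber_weight x / emp_mass x)) + ereal (fiber_weight a) * cinf"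
    unfolding reweighted_singleton reweighted_outside ..
  also have "\<dots> \<le> (\<Sum>x\<in>S. ext_int \<nu> (\<lambda>y. if y \<in> fiber x then diag_cost y else 0)) + ext_int \<nu> (\<lambda>y. if y \<in> fiber a then diag_cost y else 0)"
    by (intro add_mono sum_mono emp_term_le_fiber_cost inf_term_le_fiber_cost)
  also have "\<dots> = ext_int \<nu> diag_cost" unfolding split by (simp add: add.commute)
  also have "\<dots> \<le> ereal r" by (rule ext_int_diag_cost_le)
  finally show ?thesis .
qed

lemma ext_int_value_eq_reweighted: "ext_int \<nu> (\<lambda>(v, w). ereal (ell v * w)) = ext_int reweighted (\<lambda>z. ereal (ell z))"
proof -
  have "ext_int \<nu> (\<lambda>(v, w). ereal (ell v * w)) = ext_int \<nu> (\<lambda>y. ereal (\<Sum>x\<in>insert a S. ell x * (snd y * indicator (fiber x) y)))"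
  proof (rule ext_int_cong_AE)
    show "AE y in \<nu>. (case y of (v, w) \<Rightarrow> ereal (ell v * w)) = ereal (\<Sum>x\<in>insert a S. ell x * (snd y * indicator (fiber x) y))"
      using AE_fst_in_support
    proof (rule eventually_mono)
      fix y :: "'a \<times> real" assume y: "fst y \<in> insert a S"
      have "(\<Sum>x\<in>insert a S. ell x * (snd y * indicator (fiber x) y)) = (\<Sum>x\<in>{fst y}. ell x * (snd y * indicator (fiber x) y))"
        using y by (intro sum.mono_neutral_right) (auto simp: fiber_def)
      then show "(case y of (v, w) \<Rightarrow> ereal (ell v * w)) = ereal (\<Sum>x\<in>insert a S. ell x * (snd y * indicator (fiber x) y))"
        by (cases y) (simp add: fiber_def)
    qed
  qed
  also have "\<dots> = ereal (\<integral> y. (\<Sum>x\<in>insert a S. ell x * (snd y * indicator (fiber x) y)) \<partial>\<nu>)"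
    by (rule ext_int_ereal) (use integrable_weight_fiber in auto)
  also have "(\<integral> y. (\<Sum>x\<in>insert a S. ell x * (snd y * indicator (fiber x) y)) \<partial>\<nu>)
      = (\<Sum>x\<in>insert a S. \<integral> y. ell x * (snd y * indicator (fiber x) y) \<partial>\<nu>)"
    by (rule Bochner_Integration.integral_sum) (use integrable_weight_fiber in auto)
  also have "\<dots> = (\<Sum>x\<in>insert a S. ell x * fiber_weight x)"
    unfolding fiber_weight_def by simp
  also have "\<dots> = ext_int reweighted (\<lambda>z. ereal (ell z))"
  proof -
    have "ext_int reweighted (\<lambda>z. ereal (ell z)) = (\<Sum>x\<in>insert a S. ereal (measure reweighted {x}) * ereal (ell x))"
      by (rule ext_int_finite_support[OF finite_measure_reweighted]) (use reweighted_null singleton_borel in \<open>auto simp: space_reweighted sets_reweighted\<close>)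
    then show ?thesis by (simp add: reweighted_singleton sum_ereal mult.commute)
  qed
  finally show ?thesis .
qed

end

definition ot_dro_value ::
  "'a::euclidean_space set \<Rightarrow> ('a \<Rightarrow> real) \<Rightarrow> (('a \<times> real) \<Rightarrow> ('a \<times> real) \<Rightarrow> ereal) \<Rightarrow>
   ('a \<times> real) measure \<Rightarrow> real \<Rightarrow> ereal" where
  "ot_dro_value Z ell c \<nu>h r =
     (SUP \<nu> \<in> {\<nu>. prob_space \<nu> \<and> sets \<nu> = sets borel \<and> emeasure \<nu> (Z \<times> {0..}) = 1 \<and>
                 OT_disc c \<nu> \<nu>h \<le> ereal r}.
        ext_int \<nu> (\<lambda>(v, w). ereal (ell v * w)))"

definition phi_dro_value ::
  "'a::euclidean_space set \<Rightarrow> ('a \<Rightarrow> real) \<Rightarrow> (real \<Rightarrow> ereal) \<Rightarrow> 'a measure \<Rightarrow> real \<Rightarrow> ereal" where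
  "phi_dro_value Z ell \<phi> \<mu>h r =
     (SUP \<mu> \<in> {\<mu>. prob_space \<mu> \<and> sets \<mu> = sets borel \<and> emeasure \<mu> Z = 1 \<and> phi_div \<phi> \<mu> \<mu>h \<le> ereal r}.
        ext_int \<mu> (\<lambda>z. ereal (ell z)))"

context ot_phi_setting
begin

lemma ot_feasible_imp_phi_feasible:
  assumes "prob_space \<nu>" "sets \<nu> = sets borel" "emeasure \<nu> (Z \<times> {0..}) = 1"
    and "OT_disc (cost_ot \<phi> n zh \<epsilon>) \<nu> (nu_hat n zh \<epsilon>) \<le> ereal r"
  shows "\<exists>\<mu>\<in>{\<mu>. prob_space \<mu> \<and> sets \<mu> = sets borel \<and> emeasure \<mu> Z = 1 \<and> phi_div \<phi> \<mu> muh \<le> ereal r}.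
    ext_int \<nu> (\<lambda>(v, w). ereal (ell v * w)) \<le> ext_int \<mu> (\<lambda>z. ereal (ell z))"
proof -
  interpret ot_feasible Z ell \<phi> \<epsilon> n zh \<nu> r
    by (intro ot_feasible.intro ot_feasible_axioms.intro ot_phi_setting_axioms assms)
  show ?thesis
    using prob_space_reweighted sets_reweighted emeasure_reweighted_Z phi_div_reweighted_le
      ext_int_value_eq_reweighted by auto
qed

lemma phi_feasible_imp_ot_feasible:
  assumes "prob_space \<mu>" "sets \<mu> = sets borel" "emeasure \<mu> Z = 1" "phi_div \<phi> \<mu> muh \<le> ereal r"
  shows "\<exists>\<nu>\<in>{\<nu>. prob_space \<nu> \<and> sets \<nu> = sets borel \<and> emeasure \<nu> (Z \<times> {0..}) = 1 \<and>
      OT_disc (cost_ot \<phi> n zh \<epsilon>) \<nu> (nu_hat n zh \<epsilon>) \<le> ereal r}.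
    ext_int \<mu> (\<lambda>z. ereal (ell z)) \<le> ext_int \<nu> (\<lambda>(v, w). ereal (ell v * w))"
proof -
  interpret phi_lift Z ell \<phi> \<epsilon> n zh \<mu>
    by (intro phi_lift.intro phi_lift_axioms.intro ot_phi_setting_axioms assms)
  have "OT_disc (cost_ot \<phi> n zh \<epsilon>) lifted (nu_hat n zh \<epsilon>) \<le> phi_div \<phi> \<mu> muh"
    unfolding OT_disc_eq_INF_couplings ext_int_cost_lift_coupling[symmetric]
    by (rule INF_lower[OF lift_coupling_in_couplings])
  then show ?thesis
    using assms prob_space_pmf_borel lifted_support ext_int_value_le_lifted
    by (intro bexI[of _ lifted]) (auto simp: lifted_def)
qed

lemma ot_dro_value_eq_phi_dro_value:
  "ot_dro_value Z ell (cost_ot \<phi> n zh \<epsilon>) (nu_hat n zh \<epsilon>) r = phi_dro_value Z ell \<phi> muh r"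
  unfolding ot_dro_value_def phi_dro_value_def
  by (rule antisym; rule SUP_mono; clarify;
      (rule ot_feasible_imp_phi_feasible phi_feasible_imp_ot_feasible; assumption))

end

theorem mainTheorem3:
  fixes Z :: "'a::euclidean_space set"
    and ell :: "'a \<Rightarrow> real"
    and \<phi> :: "real \<Rightarrow> ereal"
    and r \<epsilon> :: real
    and n :: nat
    and zh :: "nat \<Rightarrow> 'a"
  assumes "compact Z" and "convex Z"
    and "usc_on Z ell"
    and "entropy_function \<phi>"
    and "r \<ge> 0"
    and "0 < \<epsilon>" and "\<epsilon> < 1"
    and "n \<ge> 1"
    and "\<forall>i\<in>{1..n}. zh i \<in> Z"
    and "zh (Suc n) \<in> Z" and "\<forall>z\<in>Z. ell z \<le> ell (zh (Suc n))"
    and "zh (Suc n) \<notin> zh ` {1..n}"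
  shows
    "(SUP \<nu> \<in> {\<nu> :: ('a \<times> real) measure.
                 prob_space \<nu> \<and> sets \<nu> = sets borel \<and> emeasure \<nu> (Z \<times> {0..}) = 1 \<and>
                 OT_disc (cost_ot \<phi> n zh \<epsilon>) \<nu> (nu_hat n zh \<epsilon>) \<le> ereal r}.
        ext_int \<nu> (\<lambda>(v, w). ereal (ell v * w)))
     =
     (SUP \<mu> \<in> {\<mu> :: 'a measure.
                 prob_space \<mu> \<and> sets \<mu> = sets borel \<and> emeasure \<mu> Z = 1 \<and>
                 phi_div \<phi> \<mu> (empirical n zh) \<le> ereal r}.
        ext_int \<mu> (\<lambda>z. ereal (ell z)))"
proof -
  \<comment> \<open>compactness is used only through closedness\<close>
  interpret ot_phi_setting Z ell \<phi> \<epsilon> n zh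
    using assms by unfold_locales (auto intro: compact_imp_closed)
  show ?thesis
    using ot_dro_value_eq_phi_dro_value[of r] unfolding ot_dro_value_def phi_dro_value_def .
qed

end
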